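(* Let $\mathbb{F}$ be a field of characteristic zero, $n\ge 1$, $m=2n-1$, and let $\mathfrak{sl}(2)\ltimes \mathfrak{a}_m$ be the Lie algebra in which $\mathfrak{a}_m$ is an abelian ideal isomorphic to $V(m)$ as an $\mathfrak{sl}(2)$-module. Let $V_1=E(a,b)$ with $a+b=m$ and $a,b\neq 0$, with socle decomposition $V_1=V(a)\oplus V(b)$. Let $V_2=V(c)\oplus V(d)$ be the socle decomposition of a uniserial $(\mathfrak{sl}(2)\ltimes\mathfrak{a}_m)$-module of composition length $2$, and put $$S_1(V_1,V_2)=\big(V(a)\otimes V(d)\;\oplus\; V(b)\otimes V(c)\big)^{\mathfrak{a}_m}\subseteq V_1\otimes V_2 .$$ Then: (i) If $V_2\simeq E(c,d)$ with $c+d=m$ and $0<a\le c<m$, then, as $\mathfrak{sl}(2)$-modules, $S_1(V_1,V_2)\simeq V(d-a)$ if $d-a=b-c\ge 0$, and $S_1(V_1,V_2)=0$ otherwise. (ii) If $V_2\simeq Z(c,1)\simeq E(c,c+m)$, then, as $\mathfrak{sl}(2)$-modules, $S_1(V_1,V_2)\simeq V(b)$ if $c=0$, and $S_1(V_1,V_2)=0$ if $c\neq 0$. (iii) If $V_2\simeq Z(d,1)^*\simeq E(d+m,d)$, then $S_1(V_1,V_2)=0$.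
   Context: All Lie algebras and modules are finite dimensional over $\mathbb{F}$ (characteristic zero). $V(k)$ denotes the irreducible $\mathfrak{sl}(2)$-module of highest weight $k$ ($\dim V(k)=k+1$). For a module $U$ over a Lie algebra $\mathfrak{g}$, $\mathrm{soc}(U)$ is the sum of all irreducible submodules; the socle series is $0=\mathrm{soc}^0(U)\subset \mathrm{soc}^1(U)\subset\cdots$ with $\mathrm{soc}^{i}(U)/\mathrm{soc}^{i-1}(U)=\mathrm{soc}(U/\mathrm{soc}^{i-1}(U))$. $U$ is uniserial if it has a unique composition series, i.e. all socle factors are irreducible. For a uniserial $(\mathfrak{sl}(2)\ltimes\mathfrak{a}_m)$-module $U$ of composition length $\ell+1$, a socle decomposition is a decomposition $U=V(a_0)\oplus\cdots\oplus V(a_\ell)$ into irreducible $\mathfrak{sl}(2)$-submodules with $\mathrm{soc}^{i+1}(U)=V(a_0)\oplus\cdots\oplus V(a_i)$ for all $i$ (the order of summands matters). The tensor product carries the action $x(v\otimes w)=xv\otimes w+v\otimes xw$, and $(\cdot)^{\mathfrak{a}_m}$ denotes the subspace annihilated by $\mathfrak{a}_m$. For nonnegative integers $a,b$ with $a+b\equiv m \pmod 2$ and $|a-b|\le m\le a+b$, there is, up to scalar, a unique nonzero $\mathfrak{sl}(2)$-module map $\mathfrak{a}_m\otimes V(b)\to V(a)$; $E(a,b)$ is the $\mathfrak{sl}(2)$-module $V(a)\oplus V(b)$ on which $\mathfrak{a}_m$ acts by killing $V(a)$ and mapping $V(b)$ into $V(a)$ via this map. It is uniserial with socle $V(a)$.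 For integers $\alpha,\ell\ge 0$, $Z(\alpha,\ell)$ is the $\mathfrak{sl}(2)$-module $V(\alpha)\oplus V(\alpha+m)\oplus\cdots\oplus V(\alpha+\ell m)$ where $\mathfrak{a}_m$ kills $V(\alpha)$ and maps each $V(\alpha+im)$ into $V(\alpha+(i-1)m)$ via the nonzero equivariant map above; $Z(\alpha,\ell)^*$ is its dual. In particular $Z(c,1)=E(c,c+m)$ and $Z(d,1)^*\simeq E(d+m,d)$. *)

theory Defs
  imports Main "HOL-Library.Function_Algebras"
begin

text \<open>Generators of sl(2) ltimes a_m: the standard basis E, F, H of sl(2) and the
  basis elements X 0, ..., X m of the abelian ideal a_m, where a_m is identified with
  V(m) as an sl(2)-module (X i corresponds to the i-th standard basis vector of V(m)).\<close>
datatype gen = E | F | H | X nat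

text \<open>Finite-dimensional modules are given concretely by an index set I of basis
  vectors and matrices rho g (column s = image of basis vector s).\<close>
definition act :: "(gen \<Rightarrow> 'i \<Rightarrow> 'i \<Rightarrow> 'k::field) \<Rightarrow> 'i set \<Rightarrow> gen \<Rightarrow> ('i \<Rightarrow> 'k) \<Rightarrow> ('i \<Rightarrow> 'k)" where
  "act rho I g v = (\<lambda>r. \<Sum>s\<in>I. rho g r s * v s)"

definition Vrho :: "nat \<Rightarrow> gen \<Rightarrow> nat \<Rightarrow> nat \<Rightarrow> 'k::field" where
  "Vrho k g r s = (case g of
      E \<Rightarrow> (if s = r + 1 \<and> s \<le> k then of_nat (s * (k - s + 1)) else 0)
    | F \<Rightarrow> (if r = s + 1 \<and> r \<le> k then 1 else 0)
    | H \<Rightarrow> (if r = s \<and> s \<le> k then of_int (int k - 2 * int s) else 0)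
    | X i \<Rightarrow> 0)"

definition Vsp :: "nat \<Rightarrow> (nat \<Rightarrow> 'k::field) set" where
  "Vsp k = {v. \<forall>i. k < i \<longrightarrow> v i = 0}"

text \<open>A bilinear map a_m x V(b) -> V(a) given by coefficients:
  phi(x_i (x) v_j) = sum_k C i j k w_k. It is sl(2)-equivariant if
  phi(g x (x) v) + phi(x (x) g v) = g phi(x (x) v) for g in {E,F,H}.\<close>
definition equivariant :: "nat \<Rightarrow> nat \<Rightarrow> nat \<Rightarrow> (nat \<Rightarrow> nat \<Rightarrow> nat \<Rightarrow> 'k::field) \<Rightarrow> bool" where
  "equivariant m b a C \<longleftrightarrow>
     (\<forall>g\<in>{E, F, H}. \<forall>i\<le>m. \<forall>j\<le>b. \<forall>k\<le>a.
        (\<Sum>i'\<le>m. Vrho m g i' i * C i' j k) + (\<Sum>j'\<le>b. Vrho b g j' j * C i j' k)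
        = (\<Sum>k'\<le>a. Vrho a g k k' * C i j k'))"

definition nonzero_map :: "nat \<Rightarrow> nat \<Rightarrow> nat \<Rightarrow> (nat \<Rightarrow> nat \<Rightarrow> nat \<Rightarrow> 'k::field) \<Rightarrow> bool" where
  "nonzero_map m b a C \<longleftrightarrow> (\<exists>i\<le>m. \<exists>j\<le>b. \<exists>k\<le>a. C i j k \<noteq> 0)"

text \<open>E(a,b): basis Inl 0..Inl a (the socle V(a)) and Inr 0..Inr b (the top V(b));
  a_m kills V(a) and maps V(b) to V(a) via C.\<close>
definition EI :: "nat \<Rightarrow> nat \<Rightarrow> (nat + nat) set" where
  "EI a b = Inl ` {..a} \<union> Inr ` {..b}"

definition Erho :: "nat \<Rightarrow> nat \<Rightarrow> (nat \<Rightarrow> nat \<Rightarrow> nat \<Rightarrow> 'k::field)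
      \<Rightarrow> gen \<Rightarrow> nat + nat \<Rightarrow> nat + nat \<Rightarrow> 'k" where
  "Erho a b C g r s = (if r \<in> EI a b \<and> s \<in> EI a b then
     (case g of
        X i \<Rightarrow> (case (r, s) of (Inl k, Inr j) \<Rightarrow> C i j k | _ \<Rightarrow> 0)
      | _ \<Rightarrow> (case (r, s) of (Inl k, Inl k') \<Rightarrow> Vrho a g k k'
                         | (Inr j, Inr j') \<Rightarrow> Vrho b g j j'
                         | _ \<Rightarrow> 0))
     else 0)"

definition trho :: "(gen \<Rightarrow> 'i \<Rightarrow> 'i \<Rightarrow> 'k::field) \<Rightarrow> (gen \<Rightarrow> 'j \<Rightarrow> 'j \<Rightarrow> 'k)
      \<Rightarrow> gen \<Rightarrow> 'i \<times> 'j \<Rightarrow> 'i \<times> 'j \<Rightarrow> 'k" where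
  "trho rho1 rho2 g r s =
     rho1 g (fst r) (fst s) * (if snd r = snd s then 1 else 0)
     + (if fst r = fst s then 1 else 0) * rho2 g (snd r) (snd s)"

definition S1 :: "nat \<Rightarrow> nat \<Rightarrow> nat \<Rightarrow> (nat \<Rightarrow> nat \<Rightarrow> nat \<Rightarrow> 'k::field)
      \<Rightarrow> nat \<Rightarrow> nat \<Rightarrow> (nat \<Rightarrow> nat \<Rightarrow> nat \<Rightarrow> 'k) \<Rightarrow> ((nat + nat) \<times> (nat + nat) \<Rightarrow> 'k) set" where
  "S1 m a b C1 c d C2 =
     {u. (\<forall>p. p \<notin> (Inl ` {..a} \<times> Inr ` {..d}) \<union> (Inr ` {..b} \<times> Inl ` {..c}) \<longrightarrow> u p = 0)
       \<and> (\<forall>i\<le>m. act (trho (Erho a b C1) (Erho c d C2)) (EI a b \<times> EI c d) (X i) u = 0)}"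

definition sl2_iso_V :: "(gen \<Rightarrow> 'i \<Rightarrow> 'i \<Rightarrow> 'k::field) \<Rightarrow> 'i set \<Rightarrow> ('i \<Rightarrow> 'k) set \<Rightarrow> nat \<Rightarrow> bool" where
  "sl2_iso_V rho I S k \<longleftrightarrow>
     (\<forall>g\<in>{E, F, H}. \<forall>u\<in>S. act rho I g u \<in> S) \<and>
     (\<exists>\<phi> :: ('i \<Rightarrow> 'k) \<Rightarrow> (nat \<Rightarrow> 'k).
        (\<forall>u\<in>S. \<forall>v\<in>S. \<phi> (u + v) = \<phi> u + \<phi> v) \<and>
        (\<forall>t. \<forall>u\<in>S. \<phi> (\<lambda>p. t * u p) = (\<lambda>p. t * \<phi> u p)) \<and>
        bij_betw \<phi> S (Vsp k) \<and>
        (\<forall>g\<in>{E, F, H}. \<forall>u\<in>S. \<phi> (act rho I g u) = act (Vrho k) {..k} g (\<phi> u)))"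

end

theory Submission
  imports Defs
begin

text \<open>S_1 is an sl(2)-submodule of V_1 (x) V_2 with a basis of weight vectors, so it is
  determined by its lowest weight vectors, the kernel of F: a module in which this kernel is
  spanned by one vector of weight -e is V(e), and a module in which it is zero is zero.
  Since [F, X i] = X (i + 1), annihilation by a_m reduces to annihilation by X 0. By weight
  considerations X 0 only involves edge coordinates of the blocks V(a) (x) V(d) and
  V(b) (x) V(c); together with F this leaves, on each block, alternating coordinates along a
  single antidiagonal, the two blocks being linked through their corner coordinates. For
  V_2 = E(c, d) with c + d = m this leaves one lowest weight vector, of weight a - d, when
  a <= d and none otherwise; for Z(c, 1) with c > 0 and for Z(d, 1)^* it forces every lowest
  weight vector to vanish.\<close>

section \<open>Weight modules over sl(2)\<close>

text \<open>Vectors are coordinate functions on an index set of H-eigenvectors; wt gives the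
  eigenvalue of each index.\<close>

definition weight_vec :: "('i \<Rightarrow> int) \<Rightarrow> int \<Rightarrow> ('i \<Rightarrow> 'k::zero) \<Rightarrow> bool" where
  "weight_vec wt w u \<longleftrightarrow> (\<forall>r. u r \<noteq> 0 \<longrightarrow> wt r = w)"

definition weight_proj :: "('i \<Rightarrow> int) \<Rightarrow> int \<Rightarrow> ('i \<Rightarrow> 'k::zero) \<Rightarrow> 'i \<Rightarrow> 'k" where
  "weight_proj wt w u = (\<lambda>r. if wt r = w then u r else 0)"

lemma weight_vec_unique:
  assumes "weight_vec wt w u" "weight_vec wt w' u" "u \<noteq> (\<lambda>_. 0)"
  shows "w = w'"
proof -
  from assms(3) obtain r where "u r \<noteq> 0" by auto
  with assms(1,2) show ?thesis unfolding weight_vec_def by metis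
qed

lemma weight_vec_smult: "weight_vec wt w u \<Longrightarrow> weight_vec wt w (\<lambda>r. (t::'k::field) * u r)"
  unfolding weight_vec_def by auto

lemma weight_vec_weight_proj: "weight_vec wt w (weight_proj wt w u)"
  unfolding weight_vec_def weight_proj_def by auto

lemma sum_single:
  assumes "s \<in> A" "finite A" "\<And>s'. s' \<in> A \<Longrightarrow> s' \<noteq> s \<Longrightarrow> f s' = 0"
  shows "sum f A = f s"
  using assms by (simp add: sum.remove[of A s] sum.neutral)

text \<open>H is not a parameter: it acts on a weight vector by its weight, so [E, F] = H
  becomes EF_commutator.\<close>

locale sl2_weight_module =
  fixes S :: "('i \<Rightarrow> 'k::field_char_0) set" and Eo Fo :: "('i \<Rightarrow> 'k) \<Rightarrow> 'i \<Rightarrow> 'k"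
    and wt :: "'i \<Rightarrow> int" and I :: "'i set"
  assumes finite_I: "finite I"
    and support: "u \<in> S \<Longrightarrow> r \<notin> I \<Longrightarrow> u r = 0"
    and zero_mem: "(\<lambda>_. 0) \<in> S"
    and add_mem: "u \<in> S \<Longrightarrow> v \<in> S \<Longrightarrow> (\<lambda>r. u r + v r) \<in> S"
    and smult_mem: "u \<in> S \<Longrightarrow> (\<lambda>r. t * u r) \<in> S"
    and E_mem: "u \<in> S \<Longrightarrow> Eo u \<in> S"
    and F_mem: "u \<in> S \<Longrightarrow> Fo u \<in> S"
    and E_add: "u \<in> S \<Longrightarrow> v \<in> S \<Longrightarrow> Eo (\<lambda>r. u r + v r) = (\<lambda>r. Eo u r + Eo v r)"
    and E_smult: "u \<in> S \<Longrightarrow> Eo (\<lambda>r. t * u r) = (\<lambda>r. t * Eo u r)"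
    and F_add: "u \<in> S \<Longrightarrow> v \<in> S \<Longrightarrow> Fo (\<lambda>r. u r + v r) = (\<lambda>r. Fo u r + Fo v r)"
    and F_smult: "u \<in> S \<Longrightarrow> Fo (\<lambda>r. t * u r) = (\<lambda>r. t * Fo u r)"
    and E_weight: "weight_vec wt w u \<Longrightarrow> weight_vec wt (w + 2) (Eo u)"
    and F_weight: "weight_vec wt w u \<Longrightarrow> weight_vec wt (w - 2) (Fo u)"
    and EF_commutator: "u \<in> S \<Longrightarrow> weight_vec wt w u \<Longrightarrow> Eo (Fo u) r = Fo (Eo u) r + of_int w * u r"
    and weight_proj_mem: "u \<in> S \<Longrightarrow> weight_proj wt w u \<in> S"
begin

lemma E_zero: "Eo (\<lambda>_. 0) = (\<lambda>_. 0)"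
  using E_smult[OF zero_mem, of 0] by simp

lemma F_zero: "Fo (\<lambda>_. 0) = (\<lambda>_. 0)"
  using F_smult[OF zero_mem, of 0] by simp

lemma Fpow_mem: "u \<in> S \<Longrightarrow> (Fo ^^ n) u \<in> S"
  by (induction n) (auto intro: F_mem)

lemma Fpow_weight: "weight_vec wt w u \<Longrightarrow> weight_vec wt (w - 2 * int n) ((Fo ^^ n) u)"
proof (induction n)
  case (Suc n)
  then show ?case using F_weight[OF Suc.IH[OF Suc.prems]] by (simp add: algebra_simps)
qed simp

lemma sum_mem: "finite A \<Longrightarrow> \<forall>x\<in>A. f x \<in> S \<Longrightarrow> (\<lambda>r. \<Sum>x\<in>A. c x * f x r) \<in> S"
proof (induction A rule: finite_induct)
  case (insert a A)
  then show ?case using add_mem[OF smult_mem[of "f a" "c a"] insert.IH] by simp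
qed (simp add: zero_mem)

lemma linear_sum:
  assumes add: "\<And>u v. u \<in> S \<Longrightarrow> v \<in> S \<Longrightarrow> T (\<lambda>r. u r + v r) = (\<lambda>r. T u r + T v r)"
    and smult: "\<And>u t. u \<in> S \<Longrightarrow> T (\<lambda>r. t * u r) = (\<lambda>r. t * T u r)"
    and "finite A" "\<forall>x\<in>A. f x \<in> S"
  shows "T (\<lambda>r. \<Sum>x\<in>A. c x * f x r) = (\<lambda>r. \<Sum>x\<in>A. c x * T (f x) r)"
  using assms(3,4)
proof (induction A rule: finite_induct)
  case empty
  show ?case using smult[OF zero_mem, of 0] by simp
next
  case (insert a A)
  have "T (\<lambda>r. c a * f a r + (\<Sum>x\<in>A. c x * f x r))
      = (\<lambda>r. T (\<lambda>r. c a * f a r) r + T (\<lambda>r. \<Sum>x\<in>A. c x * f x r) r)"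
    using add[OF smult_mem[of "f a" "c a"] sum_mem[of A f c]] insert by simp
  then show ?case using insert smult by simp
qed

lemma E_sum:
  "finite A \<Longrightarrow> \<forall>x\<in>A. f x \<in> S \<Longrightarrow> Eo (\<lambda>r. \<Sum>x\<in>A. c x * f x r) = (\<lambda>r. \<Sum>x\<in>A. c x * Eo (f x) r)"
  by (rule linear_sum[OF E_add E_smult])

lemma F_sum:
  "finite A \<Longrightarrow> \<forall>x\<in>A. f x \<in> S \<Longrightarrow> Fo (\<lambda>r. \<Sum>x\<in>A. c x * f x r) = (\<lambda>r. \<Sum>x\<in>A. c x * Fo (f x) r)"
  by (rule linear_sum[OF F_add F_smult])

lemma F_diff: "u \<in> S \<Longrightarrow> v \<in> S \<Longrightarrow> Fo (\<lambda>r. u r - v r) = (\<lambda>r. Fo u r - Fo v r)"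
  using F_add[OF _ smult_mem[of v "-1"]] F_smult[of v "-1"] by simp

lemma F_nilpotent:
  assumes "u \<in> S" "weight_vec wt w u"
  obtains n where "(Fo ^^ n) u = (\<lambda>_. 0)"
proof -
  define L where "L = - (\<Sum>x\<in>I. \<bar>wt x\<bar>)"
  have L: "L \<le> wt r" if "r \<in> I" for r
    using member_le_sum[of r I "\<lambda>x. \<bar>wt x\<bar>"] finite_I that unfolding L_def by auto
  define n where "n = nat (w - L) + 1"
  have n: "w - L + 1 \<le> int n" unfolding n_def by simp
  have "(Fo ^^ n) u r = 0" for r
  proof (cases "r \<in> I")
    case True
    then have "wt r \<noteq> w - 2 * int n" using L[OF True] n by linarith
    then show ?thesis using Fpow_weight[OF assms(2)] unfolding weight_vec_def by blast
  qed (use support Fpow_mem assms(1) in blast)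
  then show ?thesis using that by blast
qed

lemma weight_decomposition:
  assumes "u \<in> S" shows "u = (\<lambda>r. \<Sum>w\<in>wt ` I. weight_proj wt w u r)"
proof
  fix r
  show "u r = (\<Sum>w\<in>wt ` I. weight_proj wt w u r)"
  proof (cases "r \<in> I")
    case True
    have "(\<Sum>w\<in>wt ` I. weight_proj wt w u r) = (\<Sum>w\<in>wt ` I. if w = wt r then u r else 0)"
      unfolding weight_proj_def by (rule sum.cong) auto
    then show ?thesis using True finite_I by (simp add: sum.delta')
  next
    case False
    then show ?thesis using support[OF assms False] by (simp add: weight_proj_def sum.neutral)
  qed
qed

lemma weight_mult_mem:
  assumes "u \<in> S" shows "(\<lambda>r. of_int (wt r) * u r) \<in> S"
proof -
  have "(\<lambda>r. of_int (wt r) * u r) = (\<lambda>r. \<Sum>w\<in>wt ` I. of_int w * weight_proj wt w u r)"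
    by (subst weight_decomposition[OF assms]) (auto simp: weight_proj_def sum_distrib_left intro!: sum.cong)
  then show ?thesis
    using sum_mem[of "wt ` I" "\<lambda>w. weight_proj wt w u" of_int] finite_I weight_proj_mem[OF assms]
    by simp
qed

lemma eq_zero_if_ker_F_trivial:
  assumes ker_F: "\<And>u. u \<in> S \<Longrightarrow> Fo u = (\<lambda>_. 0) \<Longrightarrow> u = (\<lambda>_. 0)"
    and u: "u \<in> S"
  shows "u = (\<lambda>_. 0)"
proof -
  have Fpow_ker: "v = (\<lambda>_. 0)" if "v \<in> S" "(Fo ^^ n) v = (\<lambda>_. 0)" for n v
    using that
  proof (induction n arbitrary: v)
    case (Suc n)
    then have "Fo v = (\<lambda>_. 0)" using F_mem by (simp add: funpow_Suc_right del: funpow.simps)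
    then show ?case using ker_F Suc.prems(1) by blast
  qed simp
  have "weight_proj wt w u = (\<lambda>_. 0)" for w
    using F_nilpotent[OF weight_proj_mem[OF u] weight_vec_weight_proj] Fpow_ker weight_proj_mem[OF u]
    by metis
  then show ?thesis using weight_decomposition[OF u] by simp
qed

end

locale sl2_lowest_weight_module = sl2_weight_module S Eo Fo wt I
  for S :: "('i \<Rightarrow> 'k::field_char_0) set" and Eo Fo wt I +
  fixes e :: nat and z :: "'i \<Rightarrow> 'k"
  assumes z_mem: "z \<in> S" and z_nonzero: "z \<noteq> (\<lambda>_. 0)" and z_weight: "weight_vec wt (- int e) z"
    and F_z: "Fo z = (\<lambda>_. 0)"
    and ker_F: "u \<in> S \<Longrightarrow> Fo u = (\<lambda>_. 0) \<Longrightarrow> \<exists>t. u = (\<lambda>r. t * z r)"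
begin

definition ybasis :: "nat \<Rightarrow> 'i \<Rightarrow> 'k" where "ybasis s = (Eo ^^ s) z"

lemma ybasis_0: "ybasis 0 = z" and ybasis_Suc: "ybasis (Suc s) = Eo (ybasis s)"
  by (simp_all add: ybasis_def)

lemma ybasis_mem: "ybasis s \<in> S"
  by (induction s) (auto simp: ybasis_0 ybasis_Suc z_mem intro: E_mem)

lemma ybasis_weight: "weight_vec wt (2 * int s - int e) (ybasis s)"
proof (induction s)
  case (Suc s)
  then show ?case using E_weight[OF Suc.IH] by (simp add: ybasis_Suc algebra_simps)
qed (use z_weight in \<open>simp add: ybasis_0\<close>)

lemma F_ybasis_Suc: "Fo (ybasis (Suc s)) = (\<lambda>r. of_int (int (Suc s) * (int e - int s)) * ybasis s r)"
proof (induction s)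
  case 0
  show ?case using EF_commutator[OF z_mem z_weight] E_zero F_z by (simp add: ybasis_0 ybasis_Suc)
next
  case (Suc s)
  define c :: 'k where "c = of_int (int (Suc s) * (int e - int s))"
  define w :: 'k where "w = of_int (2 * int (Suc s) - int e)"
  have cw: "c - w = of_int (int (Suc (Suc s)) * (int e - int (Suc s)))"
    unfolding c_def w_def by (simp add: algebra_simps)
  have "Eo (Fo (ybasis (Suc s))) = Eo (\<lambda>r. c * ybasis s r)"
    unfolding c_def Suc.IH ..
  also have "\<dots> = (\<lambda>r. c * ybasis (Suc s) r)"
    by (simp add: E_smult[OF ybasis_mem] ybasis_Suc)
  finally have EF: "Eo (Fo (ybasis (Suc s))) = (\<lambda>r. c * ybasis (Suc s) r)" .
  show ?case
  proof
    fix r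
    have "Eo (Fo (ybasis (Suc s))) r = Fo (ybasis (Suc (Suc s))) r + w * ybasis (Suc s) r"
      using EF_commutator[OF ybasis_mem ybasis_weight, of "Suc s" r]
      unfolding w_def ybasis_Suc[of "Suc s"] .
    then have "Fo (ybasis (Suc (Suc s))) r = (c - w) * ybasis (Suc s) r"
      unfolding EF by (simp add: algebra_simps)
    then show "Fo (ybasis (Suc (Suc s))) r
        = of_int (int (Suc (Suc s)) * (int e - int (Suc s))) * ybasis (Suc s) r"
      unfolding cw .
  qed
qed

lemma F_ybasis: "Fo (ybasis s) = (\<lambda>r. of_int (int s * (int e - int s + 1)) * ybasis (s - 1) r)"
  using F_ybasis_Suc[of "s - 1"] F_z by (cases s) (simp_all add: ybasis_0 algebra_simps)

lemma ybasis_nonzero: "s \<le> e \<Longrightarrow> ybasis s \<noteq> (\<lambda>_. 0)"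
proof (induction s)
  case (Suc s)
  show ?case
  proof
    assume "ybasis (Suc s) = (\<lambda>_. 0)"
    then have "(\<lambda>r. of_int (int (Suc s) * (int e - int s)) * ybasis s r) = (\<lambda>_. (0::'k))"
      using F_ybasis_Suc[of s] F_zero by simp
    moreover have "(of_int (int (Suc s) * (int e - int s)) :: 'k) \<noteq> 0"
      using Suc.prems by (simp del: of_int_mult)
    ultimately have "ybasis s = (\<lambda>_. 0)" by (simp add: fun_eq_iff)
    then show False using Suc by simp
  qed
qed (simp add: ybasis_0 z_nonzero)

lemma ybasis_vanish: "e < s \<Longrightarrow> ybasis s = (\<lambda>_. 0)"
proof (induction s)
  case (Suc s)
  show ?case
  proof (cases "s = e")
    case True
    show ?thesis
    proof (rule ccontr)
      assume nz: "ybasis (Suc s) \<noteq> (\<lambda>_. 0)"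
      obtain t where "ybasis (Suc s) = (\<lambda>r. t * z r)"
        using ker_F[OF ybasis_mem] F_ybasis_Suc[of s] True by auto
      then have "weight_vec wt (- int e) (ybasis (Suc s))" using weight_vec_smult[OF z_weight] by simp
      then have "2 * int (Suc s) - int e = - int e" using weight_vec_unique[OF ybasis_weight _ nz] by blast
      then show False using True by simp
    qed
  qed (use Suc E_zero in \<open>simp add: ybasis_Suc\<close>)
qed simp

lemma E_Fpow_Suc:
  assumes u: "u \<in> S" and Eu: "Eo u = (\<lambda>_. 0)" and wu: "weight_vec wt w u"
  shows "Eo ((Fo ^^ Suc j) u) = (\<lambda>r. of_int (int (Suc j) * (w - int j)) * (Fo ^^ j) u r)"
proof (induction j)
  case 0
  show ?case using EF_commutator[OF u wu] Eu F_zero by simp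
next
  case (Suc j)
  define c :: 'k where "c = of_int (int (Suc j) * (w - int j))"
  define w' :: 'k where "w' = of_int (w - 2 * int (Suc j))"
  have cw: "c + w' = of_int (int (Suc (Suc j)) * (w - int (Suc j)))"
    unfolding c_def w'_def by (simp add: algebra_simps)
  have FE: "Fo (Eo ((Fo ^^ Suc j) u)) = (\<lambda>r. c * (Fo ^^ Suc j) u r)"
    unfolding c_def Suc.IH F_smult[OF Fpow_mem[OF u]] by simp
  show ?case
  proof
    fix r
    have "Eo ((Fo ^^ Suc (Suc j)) u) r = Fo (Eo ((Fo ^^ Suc j) u)) r + w' * (Fo ^^ Suc j) u r"
      using EF_commutator[OF Fpow_mem[OF u] Fpow_weight[OF wu], of "Suc j" r]
      unfolding w'_def by simp
    then show "Eo ((Fo ^^ Suc (Suc j)) u) r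
        = of_int (int (Suc (Suc j)) * (w - int (Suc j))) * (Fo ^^ Suc j) u r"
      unfolding FE cw[symmetric] by (simp add: algebra_simps)
  qed
qed

lemma highest_weight_vector_weight:
  assumes u: "u \<in> S" and Eu: "Eo u = (\<lambda>_. 0)" and wu: "weight_vec wt w u"
    and nz: "u \<noteq> (\<lambda>_. 0)"
  shows "w = int e"
proof -
  obtain n where "(Fo ^^ n) u = (\<lambda>_. 0)" using F_nilpotent[OF u wu] .
  define J where "J = (LEAST n. (Fo ^^ n) u = (\<lambda>_. 0))"
  have J: "(Fo ^^ J) u = (\<lambda>_. 0)" unfolding J_def by (rule LeastI) fact
  then obtain j where j: "J = Suc j" using nz by (cases J) auto
  have nzj: "(Fo ^^ j) u \<noteq> (\<lambda>_. 0)"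
    using not_less_Least[of j "\<lambda>n. (Fo ^^ n) u = (\<lambda>_. 0)"] unfolding J_def[symmetric] j by simp
  have "(\<lambda>r. of_int (int (Suc j) * (w - int j)) * (Fo ^^ j) u r) = (\<lambda>_. (0::'k))"
    using E_Fpow_Suc[OF u Eu wu, of j] J E_zero unfolding j by simp
  then have "(of_int (int (Suc j) * (w - int j)) :: 'k) = 0"
    using nzj by (auto simp: fun_eq_iff)
  then have "w = int j" by (simp del: of_int_mult)
  moreover obtain t where "(Fo ^^ j) u = (\<lambda>r. t * z r)"
    using ker_F[OF Fpow_mem[OF u]] J unfolding j by auto
  then have "weight_vec wt (- int e) ((Fo ^^ j) u)" using weight_vec_smult[OF z_weight] by simp
  then have "w - 2 * int j = - int e" by (rule weight_vec_unique[OF Fpow_weight[OF wu] _ nzj])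
  ultimately show ?thesis by simp
qed

text \<open>A nonzero vector of maximal weight above e would be a highest weight vector of weight
  other than e.\<close>

lemma weight_above_vanish:
  assumes u: "u \<in> S" and wu: "weight_vec wt w u" and we: "int e < w"
  shows "u = (\<lambda>_. 0)"
proof (rule ccontr)
  assume nz: "u \<noteq> (\<lambda>_. 0)"
  define W where "W = {w. int e < w \<and> (\<exists>u\<in>S. weight_vec wt w u \<and> u \<noteq> (\<lambda>_. 0))}"
  have "W \<subseteq> wt ` I"
    unfolding W_def weight_vec_def using support by (fastforce simp: fun_eq_iff)
  then have finW: "finite W" using finite_I finite_subset by blast
  have "w \<in> W" unfolding W_def using u wu we nz by blast
  define M where "M = Max W"
  have "M \<in> W" unfolding M_def using finW \<open>w \<in> W\<close> by (intro Max_in) auto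
  then obtain v where v: "v \<in> S" "weight_vec wt M v" "v \<noteq> (\<lambda>_. 0)" and eM: "int e < M"
    unfolding W_def by blast
  have "Eo v = (\<lambda>_. 0)"
  proof (rule ccontr)
    assume "Eo v \<noteq> (\<lambda>_. 0)"
    then have "M + 2 \<in> W"
      unfolding W_def using E_mem[OF v(1)] E_weight[OF v(2)] eM by auto
    then show False using Max_ge[OF finW] unfolding M_def by fastforce
  qed
  then show False using highest_weight_vector_weight[OF v(1) _ v(2,3)] eM by simp
qed

definition ybasis_span :: "('i \<Rightarrow> 'k) set" where
  "ybasis_span = {v. \<exists>c. v = (\<lambda>r. \<Sum>s\<le>e. c s * ybasis s r)}"

lemma ybasis_span_add:
  assumes "u \<in> ybasis_span" "v \<in> ybasis_span" shows "(\<lambda>r. u r + v r) \<in> ybasis_span"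
proof -
  obtain c c' where "u = (\<lambda>r. \<Sum>s\<le>e. c s * ybasis s r)" "v = (\<lambda>r. \<Sum>s\<le>e. c' s * ybasis s r)"
    using assms unfolding ybasis_span_def by blast
  then have "(\<lambda>r. u r + v r) = (\<lambda>r. \<Sum>s\<le>e. (c s + c' s) * ybasis s r)"
    by (simp add: sum.distrib distrib_right)
  then show ?thesis unfolding ybasis_span_def by (intro CollectI exI[where x = "\<lambda>s. c s + c' s"])
qed

lemma ybasis_span_smult:
  assumes "u \<in> ybasis_span" shows "(\<lambda>r. t * u r) \<in> ybasis_span"
proof -
  obtain c where "u = (\<lambda>r. \<Sum>s\<le>e. c s * ybasis s r)"
    using assms unfolding ybasis_span_def by blast
  then have "(\<lambda>r. t * u r) = (\<lambda>r. \<Sum>s\<le>e. (t * c s) * ybasis s r)"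
    by (simp add: sum_distrib_left mult.assoc)
  then show ?thesis unfolding ybasis_span_def by (intro CollectI exI[where x = "\<lambda>s. t * c s"])
qed

lemma ybasis_span_zero: "(\<lambda>_. 0) \<in> ybasis_span"
  unfolding ybasis_span_def by (auto intro!: exI[where x = "\<lambda>_. 0"])

lemma ybasis_in_span: "ybasis s \<in> ybasis_span"
proof (cases "s \<le> e")
  case True
  then have "ybasis s = (\<lambda>r. \<Sum>s'\<le>e. (if s' = s then 1 else 0) * ybasis s' r)"
    by (subst sum_single[of s]) auto
  then show ?thesis
    unfolding ybasis_span_def by (intro CollectI exI[where x = "\<lambda>s'. if s' = s then 1 else 0"])
qed (simp add: ybasis_vanish ybasis_span_zero)

lemma ybasis_span_sum:
  "finite A \<Longrightarrow> \<forall>x\<in>A. f x \<in> ybasis_span \<Longrightarrow> (\<lambda>r. \<Sum>x\<in>A. f x r) \<in> ybasis_span"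
  by (induction A rule: finite_induct) (auto simp: ybasis_span_zero intro: ybasis_span_add)

text \<open>The ybasis vectors have distinct weights, so each is detected by a single coordinate.\<close>

definition ybasis_pos :: "nat \<Rightarrow> 'i" where "ybasis_pos s = (SOME r. ybasis s r \<noteq> 0)"

lemma ybasis_at_pos: "s \<le> e \<Longrightarrow> ybasis s (ybasis_pos s) \<noteq> 0"
  unfolding ybasis_pos_def using ybasis_nonzero by (metis (mono_tags) someI_ex)

lemma weight_ybasis_pos: "s \<le> e \<Longrightarrow> wt (ybasis_pos s) = 2 * int s - int e"
  using ybasis_at_pos ybasis_weight unfolding weight_vec_def by blast

lemma ybasis_at_other_pos: "s \<le> e \<Longrightarrow> s' \<noteq> s \<Longrightarrow> ybasis s' (ybasis_pos s) = 0"
  using ybasis_weight[of s'] weight_ybasis_pos[of s] unfolding weight_vec_def by auto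

lemma ybasis_comb_at_pos:
  "s \<le> e \<Longrightarrow> (\<Sum>s'\<le>e. c s' * ybasis s' (ybasis_pos s)) = c s * ybasis s (ybasis_pos s)"
  by (subst sum_single[of s]) (auto simp: ybasis_at_other_pos)

definition ycoord :: "('i \<Rightarrow> 'k) \<Rightarrow> nat \<Rightarrow> 'k" where
  "ycoord u s = u (ybasis_pos s) / ybasis s (ybasis_pos s)"

lemma ycoord_comb: "s \<le> e \<Longrightarrow> ycoord (\<lambda>r. \<Sum>s'\<le>e. c s' * ybasis s' r) s = c s"
  unfolding ycoord_def using ybasis_comb_at_pos ybasis_at_pos by simp

lemma ycoord_sum: "ycoord (\<lambda>r. \<Sum>x\<in>A. c x * f x r) s = (\<Sum>x\<in>A. c x * ycoord (f x) s)"
  unfolding ycoord_def by (simp add: sum_divide_distrib)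

lemma ycoord_ybasis: "s \<le> e \<Longrightarrow> s' \<le> e \<Longrightarrow> ycoord (ybasis s) s' = (if s = s' then 1 else 0)"
  unfolding ycoord_def using ybasis_at_pos ybasis_at_other_pos by auto

lemma ybasis_comb_weight_vec:
  assumes w: "weight_vec wt w (\<lambda>r. \<Sum>s'\<le>e. c s' * ybasis s' r)" and s: "s \<le> e" "2 * int s - int e \<noteq> w"
  shows "c s = 0"
proof (rule ccontr)
  assume "c s \<noteq> 0"
  then have "(\<Sum>s'\<le>e. c s' * ybasis s' (ybasis_pos s)) \<noteq> 0"
    using ybasis_comb_at_pos[OF s(1)] ybasis_at_pos[OF s(1)] by simp
  then show False using w s weight_ybasis_pos[OF s(1)] unfolding weight_vec_def by auto
qed

lemma mem_span_if_F_zero: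
  assumes "u \<in> S" "Fo u = (\<lambda>_. 0)" shows "u \<in> ybasis_span"
proof -
  obtain t where "u = (\<lambda>r. t * ybasis 0 r)" using ker_F[OF assms] by (auto simp: ybasis_0)
  then show ?thesis using ybasis_span_smult[OF ybasis_in_span] by simp
qed

lemma mem_span_if_F_eq_ybasis:
  assumes u: "u \<in> S" and s: "s < e" and Fu: "Fo u = (\<lambda>r. c * ybasis s r)"
  shows "u \<in> ybasis_span"
proof -
  define k :: 'k where "k = of_int (int (Suc s) * (int e - int s))"
  have "k \<noteq> 0" using s unfolding k_def by (simp del: of_int_mult)
  define v where "v = (\<lambda>r. (c / k) * ybasis (Suc s) r)"
  have v: "v \<in> S" "v \<in> ybasis_span"
    unfolding v_def by (intro smult_mem ybasis_mem, intro ybasis_span_smult ybasis_in_span)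
  have "Fo v = Fo u"
    unfolding Fu v_def F_smult[OF ybasis_mem] F_ybasis_Suc k_def[symmetric] using \<open>k \<noteq> 0\<close> by simp
  then have "Fo (\<lambda>r. u r - v r) = (\<lambda>_. 0)" using F_diff[OF u v(1)] by simp
  moreover have "(\<lambda>r. u r - v r) \<in> S" using add_mem[OF u smult_mem[OF v(1), of "-1"]] by simp
  ultimately have "(\<lambda>r. u r - v r) \<in> ybasis_span" by (rule mem_span_if_F_zero[rotated])
  from ybasis_span_add[OF v(2) this] show ?thesis by simp
qed

lemma mem_span_if_F_mem_span:
  assumes u: "u \<in> S" and wu: "weight_vec wt w u" and Fu: "Fo u \<in> ybasis_span"
  shows "u \<in> ybasis_span"
proof -
  obtain c where c: "Fo u = (\<lambda>r. \<Sum>s\<le>e. c s * ybasis s r)"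
    using Fu unfolding ybasis_span_def by blast
  have c0: "c s = 0" if "s \<le> e" "2 * int s - int e \<noteq> w - 2" for s
    using ybasis_comb_weight_vec[OF _ that] F_weight[OF wu] c by simp
  consider "\<forall>s\<le>e. c s = 0" | s where "s < e" "2 * int s - int e = w - 2" | "int e < w"
  proof (cases "\<exists>s\<le>e. 2 * int s - int e = w - 2")
    case True
    then obtain s where s: "s \<le> e" "2 * int s - int e = w - 2" by blast
    show thesis
    proof (cases "s = e")
      case True
      then show thesis using that(3) s by simp
    qed (use that(2) s in simp)
  qed (use c0 in blast)
  then show ?thesis
  proof cases
    case 1
    then show ?thesis using mem_span_if_F_zero[OF u] unfolding c by simp
  next
    case (2 s)
    then have "Fo u = (\<lambda>r. c s * ybasis s r)"
      unfolding c using c0 by (subst sum_single[of s]) auto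
    then show ?thesis using mem_span_if_F_eq_ybasis[OF u \<open>s < e\<close>] by blast
  next
    case 3
    then show ?thesis using weight_above_vanish[OF u wu] ybasis_span_zero by simp
  qed
qed

lemma mem_ybasis_span:
  assumes u: "u \<in> S" shows "u \<in> ybasis_span"
proof -
  have F_killed: "v \<in> ybasis_span" if "v \<in> S" "weight_vec wt w v" "(Fo ^^ n) v = (\<lambda>_. 0)" for v w n
    using that
  proof (induction n arbitrary: v w)
    case (Suc n)
    then have "Fo v \<in> ybasis_span"
      using Suc.IH[OF F_mem[OF Suc.prems(1)] F_weight[OF Suc.prems(2)]]
      by (simp add: funpow_Suc_right del: funpow.simps)
    then show ?case using mem_span_if_F_mem_span Suc.prems by blast
  qed (simp add: ybasis_span_zero)
  have "weight_proj wt w u \<in> ybasis_span" for w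
  proof -
    obtain n where "(Fo ^^ n) (weight_proj wt w u) = (\<lambda>_. 0)"
      using F_nilpotent[OF weight_proj_mem[OF u] weight_vec_weight_proj] .
    then show ?thesis using F_killed[OF weight_proj_mem[OF u] weight_vec_weight_proj] by blast
  qed
  then have "(\<lambda>r. \<Sum>w\<in>wt ` I. weight_proj wt w u r) \<in> ybasis_span"
    by (intro ybasis_span_sum finite_imageI finite_I) auto
  then show ?thesis by (subst weight_decomposition[OF u])
qed

lemma ybasis_expansion: "u \<in> S \<Longrightarrow> u = (\<lambda>r. \<Sum>s\<le>e. ycoord u s * ybasis s r)"
  using mem_ybasis_span[of u] unfolding ybasis_span_def by (auto simp: ycoord_comb)

end

section \<open>The irreducible modules V(e)\<close>

lemma Vrho_X [simp]: "Vrho a (X i) p k = 0"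
  unfolding Vrho_def by simp

lemma Vrho_out: "\<not> (p \<le> a \<and> k \<le> a) \<Longrightarrow> Vrho a g p k = 0"
  unfolding Vrho_def by (cases g) auto

lemma sum_Vrho_E:
  "(\<Sum>k\<le>a. Vrho a E p k * f k) = (if p < a then of_nat (Suc p * (a - p)) * f (Suc p) else 0)"
proof -
  have "(\<Sum>k\<le>a. Vrho a E p k * f k)
      = (\<Sum>k\<le>a. if k = Suc p then (if p < a then of_nat (Suc p * (a - p)) * f (Suc p) else 0) else 0)"
    by (rule sum.cong) (auto simp: Vrho_def Suc_diff_Suc)
  then show ?thesis by simp
qed

lemma sum_Vrho_F: "(\<Sum>k\<le>a. Vrho a F p k * f k) = (if 1 \<le> p \<and> p \<le> a then f (p - 1) else 0)"
proof -
  have "(\<Sum>k\<le>a. Vrho a F p k * f k)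
      = (\<Sum>k\<le>a. if k = p - 1 then (if 1 \<le> p \<and> p \<le> a then f (p - 1) else 0) else 0)"
    by (rule sum.cong) (auto simp: Vrho_def)
  then show ?thesis by auto
qed

lemma sum_Vrho_H:
  "(\<Sum>k\<le>a. Vrho a H p k * f k) = (if p \<le> a then of_int (int a - 2 * int p) * f p else 0)"
proof -
  have "(\<Sum>k\<le>a. Vrho a H p k * f k)
      = (\<Sum>k\<le>a. if k = p then (if p \<le> a then of_int (int a - 2 * int p) * f p else 0) else 0)"
    by (rule sum.cong) (auto simp: Vrho_def)
  then show ?thesis by auto
qed

lemma Vrho_EF_coeff:
  assumes "p \<le> a"
  shows "(if p < a then of_nat (Suc p * (a - p)) else 0) - (if 1 \<le> p then of_nat (p * (a - p + 1)) else 0)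
     = (of_int (int a - 2 * int p) :: 'k::field_char_0)"
proof -
  have pa: "int (a - p) = int a - int p" using assms by (simp add: of_nat_diff)
  have "int (Suc p * (a - p)) = (int p + 1) * (int a - int p)"
    and "int (p * (a - p + 1)) = int p * (int a - int p + 1)"
    by (simp_all only: of_nat_mult of_nat_add pa) simp_all
  then have key: "(if p < a then int (Suc p * (a - p)) else 0) - (if 1 \<le> p then int (p * (a - p + 1)) else 0)
      = int a - 2 * int p"
    using assms by (cases "p = 0"; cases "p < a") (simp_all add: algebra_simps)
  have "(if p < a then of_nat (Suc p * (a - p)) else 0) - (if 1 \<le> p then of_nat (p * (a - p + 1)) else 0)
      = (of_int ((if p < a then int (Suc p * (a - p)) else 0)
                 - (if 1 \<le> p then int (p * (a - p + 1)) else 0)) :: 'k)"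
    by simp
  then show ?thesis unfolding key .
qed

abbreviation Vact :: "nat \<Rightarrow> gen \<Rightarrow> (nat \<Rightarrow> 'k::field) \<Rightarrow> nat \<Rightarrow> 'k" where
  "Vact e g \<equiv> act (Vrho e) {..e} g"

lemma Vact_E: "Vact e E v = (\<lambda>r. if r < e then of_nat (Suc r * (e - r)) * v (Suc r) else 0)"
  unfolding act_def by (simp add: sum_Vrho_E)

lemma Vact_F: "Vact e F v = (\<lambda>r. if 1 \<le> r \<and> r \<le> e then v (r - 1) else 0)"
  unfolding act_def by (simp add: sum_Vrho_F)

lemma Vact_H: "Vact e H v = (\<lambda>r. if r \<le> e then of_int (int e - 2 * int r) * v r else 0)"
  unfolding act_def by (simp add: sum_Vrho_H)

lemma Vact_EF_commutator:
  fixes u :: "nat \<Rightarrow> 'k::field_char_0"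
  assumes u: "u \<in> Vsp e" and w: "weight_vec (\<lambda>r. int e - 2 * int r) w u"
  shows "Vact e E (Vact e F u) r = Vact e F (Vact e E u) r + of_int w * u r"
proof (cases "r \<le> e")
  case True
  define P :: 'k where "P = (if r < e then of_nat (Suc r * (e - r)) else 0)"
  define Q :: 'k where "Q = (if 1 \<le> r then of_nat (r * (e - r + 1)) else 0)"
  have "Vact e E (Vact e F u) r = P * u r"
    unfolding Vact_E Vact_F P_def by simp
  moreover have "Vact e F (Vact e E u) r = Q * u r"
    unfolding Vact_E Vact_F Q_def using True by (auto simp: Suc_diff_le)
  moreover have "of_int w * u r = (P - Q) * u r"
    using w Vrho_EF_coeff[OF True] unfolding weight_vec_def P_def Q_def
    by (cases "u r = 0") auto
  ultimately show ?thesis by (simp add: algebra_simps)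
next
  case False
  then show ?thesis using u unfolding Vsp_def Vact_E Vact_F by simp
qed

lemma Vsp_weight_module:
  "sl2_weight_module (Vsp e :: (nat \<Rightarrow> 'k::field_char_0) set) (Vact e E) (Vact e F)
     (\<lambda>r. int e - 2 * int r) {..e}"
proof
  fix u :: "nat \<Rightarrow> 'k" and w r
  assume "u \<in> Vsp e" "weight_vec (\<lambda>r. int e - 2 * int r) w u"
  then show "Vact e E (Vact e F u) r = Vact e F (Vact e E u) r + of_int w * u r"
    by (rule Vact_EF_commutator)
next
  fix u :: "nat \<Rightarrow> 'k" and w assume "weight_vec (\<lambda>r. int e - 2 * int r) w u"
  then show "weight_vec (\<lambda>r. int e - 2 * int r) (w + 2) (Vact e E u)"
    unfolding weight_vec_def Vact_E by (auto split: if_splits)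
next
  fix u :: "nat \<Rightarrow> 'k" and w assume "weight_vec (\<lambda>r. int e - 2 * int r) w u"
  then show "weight_vec (\<lambda>r. int e - 2 * int r) (w - 2) (Vact e F u)"
    unfolding weight_vec_def Vact_F by (auto split: if_splits simp: of_nat_diff)
next
  fix u v :: "nat \<Rightarrow> 'k"
  show "Vact e E (\<lambda>r. u r + v r) = (\<lambda>r. Vact e E u r + Vact e E v r)"
    unfolding Vact_E by (simp add: fun_eq_iff algebra_simps)
  show "Vact e F (\<lambda>r. u r + v r) = (\<lambda>r. Vact e F u r + Vact e F v r)"
    unfolding Vact_F by (simp add: fun_eq_iff algebra_simps)
next
  fix u :: "nat \<Rightarrow> 'k" and t
  show "Vact e E (\<lambda>r. t * u r) = (\<lambda>r. t * Vact e E u r)"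
    unfolding Vact_E by (simp add: fun_eq_iff algebra_simps)
  show "Vact e F (\<lambda>r. t * u r) = (\<lambda>r. t * Vact e F u r)"
    unfolding Vact_F by (simp add: fun_eq_iff algebra_simps)
qed (simp_all add: Vsp_def Vact_E Vact_F weight_proj_def)

lemma Vsp_lowest_weight_module:
  "sl2_lowest_weight_module (Vsp e :: (nat \<Rightarrow> 'k::field_char_0) set) (Vact e E) (Vact e F)
     (\<lambda>r. int e - 2 * int r) {..e} e (\<lambda>r. if r = e then 1 else 0)"
proof (rule sl2_lowest_weight_module.intro[OF Vsp_weight_module], unfold_locales)
  show "(\<lambda>r. if r = e then 1 else 0) \<in> (Vsp e :: (nat \<Rightarrow> 'k) set)"
    unfolding Vsp_def by simp
  show "(\<lambda>r. if r = e then 1 else 0) \<noteq> (\<lambda>_. 0 :: 'k)"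
    by (metis one_neq_zero)
  show "weight_vec (\<lambda>r. int e - 2 * int r) (- int e) (\<lambda>r. if r = e then 1 else (0::'k))"
    unfolding weight_vec_def by auto
  show "Vact e F (\<lambda>r. if r = e then 1 else 0) = (\<lambda>_. 0 :: 'k)"
    unfolding Vact_F by (rule ext) auto
  fix u :: "nat \<Rightarrow> 'k" assume u: "u \<in> Vsp e" and F0: "Vact e F u = (\<lambda>_. 0)"
  have "u r = u e * (if r = e then 1 else 0)" for r
  proof (cases "r < e")
    case True
    then show ?thesis using fun_cong[OF F0, of "Suc r"] unfolding Vact_F by simp
  qed (use u in \<open>auto simp: Vsp_def\<close>)
  then show "\<exists>t. u = (\<lambda>r. t * (if r = e then 1 else 0))" by blast
qed

section \<open>Lowest weight modules with the same lowest weight are isomorphic\<close>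

locale sl2_lowest_weight_pair =
  A: sl2_lowest_weight_module S Eo Fo wt I e z + B: sl2_lowest_weight_module S' Eo' Fo' wt' I' e z'
  for S :: "('i \<Rightarrow> 'k::field_char_0) set" and Eo Fo wt I e z
    and S' :: "('j \<Rightarrow> 'k) set" and Eo' Fo' wt' I' z'
begin

definition transfer :: "('i \<Rightarrow> 'k) \<Rightarrow> 'j \<Rightarrow> 'k" where
  "transfer u = (\<lambda>r. \<Sum>s\<le>e. A.ycoord u s * B.ybasis s r)"

lemma transfer_comb:
  "transfer (\<lambda>r. \<Sum>x\<in>J. c x * f x r) = (\<lambda>r. \<Sum>x\<in>J. c x * transfer (f x) r)"
  unfolding transfer_def A.ycoord_sum
  by (simp add: sum_distrib_left sum_distrib_right sum.swap[of _ J] algebra_simps)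

lemma transfer_add: "transfer (\<lambda>r. u r + v r) = (\<lambda>r. transfer u r + transfer v r)"
  unfolding transfer_def A.ycoord_def by (simp add: add_divide_distrib distrib_right sum.distrib)

lemma transfer_smult: "transfer (\<lambda>r. t * u r) = (\<lambda>r. t * transfer u r)"
  unfolding transfer_def A.ycoord_def by (simp add: sum_distrib_left algebra_simps)

lemma transfer_ybasis: "transfer (A.ybasis s) = B.ybasis s"
proof (cases "s \<le> e")
  case True
  then show ?thesis
    unfolding transfer_def by (intro ext, subst sum_single[of s]) (auto simp: A.ycoord_ybasis)
qed (simp add: transfer_def A.ycoord_def A.ybasis_vanish B.ybasis_vanish)

lemma transfer_mem: "transfer u \<in> S'"
  unfolding transfer_def using B.sum_mem B.ybasis_mem by blast

lemma transfer_E: assumes u: "u \<in> S" shows "transfer (Eo u) = Eo' (transfer u)"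
proof -
  have "Eo u = Eo (\<lambda>r. \<Sum>s\<le>e. A.ycoord u s * A.ybasis s r)"
    using A.ybasis_expansion[OF u] by simp
  also have "\<dots> = (\<lambda>r. \<Sum>s\<le>e. A.ycoord u s * A.ybasis (Suc s) r)"
    using A.E_sum[of "{..e}" A.ybasis "A.ycoord u"] A.ybasis_mem by (simp add: A.ybasis_Suc)
  finally have "transfer (Eo u) = (\<lambda>r. \<Sum>s\<le>e. A.ycoord u s * B.ybasis (Suc s) r)"
    by (simp add: transfer_comb transfer_ybasis)
  moreover have "Eo' (transfer u) = (\<lambda>r. \<Sum>s\<le>e. A.ycoord u s * B.ybasis (Suc s) r)"
    unfolding transfer_def using B.E_sum[of "{..e}" B.ybasis "A.ycoord u"] B.ybasis_mem
    by (simp add: B.ybasis_Suc)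
  ultimately show ?thesis by simp
qed

lemma transfer_F: assumes u: "u \<in> S" shows "transfer (Fo u) = Fo' (transfer u)"
proof -
  define f :: "nat \<Rightarrow> 'k" where "f s = of_int (int s * (int e - int s + 1))" for s
  have "Fo u = Fo (\<lambda>r. \<Sum>s\<le>e. A.ycoord u s * A.ybasis s r)"
    using A.ybasis_expansion[OF u] by simp
  also have "\<dots> = (\<lambda>r. \<Sum>s\<le>e. (A.ycoord u s * f s) * A.ybasis (s - 1) r)"
    using A.F_sum[of "{..e}" A.ybasis "A.ycoord u"] A.ybasis_mem
    by (simp add: A.F_ybasis f_def algebra_simps)
  finally have "transfer (Fo u) = (\<lambda>r. \<Sum>s\<le>e. (A.ycoord u s * f s) * B.ybasis (s - 1) r)"
    by (simp add: transfer_comb transfer_ybasis)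
  moreover have "Fo' (transfer u) = (\<lambda>r. \<Sum>s\<le>e. (A.ycoord u s * f s) * B.ybasis (s - 1) r)"
    unfolding transfer_def using B.F_sum[of "{..e}" B.ybasis "A.ycoord u"] B.ybasis_mem
    by (simp add: B.F_ybasis f_def algebra_simps)
  ultimately show ?thesis by simp
qed

lemma transfer_weight_mult:
  "transfer (\<lambda>r. of_int (wt r) * u r) = (\<lambda>r. of_int (wt' r) * transfer u r)"
proof
  fix r
  have A: "A.ycoord (\<lambda>r. of_int (wt r) * u r) s = of_int (2 * int s - int e) * A.ycoord u s"
    if "s \<le> e" for s
    unfolding A.ycoord_def using A.weight_ybasis_pos[OF that] by simp
  have B: "of_int (wt' r) * B.ybasis s r = of_int (2 * int s - int e) * B.ybasis s r" for s
    using B.ybasis_weight[of s] unfolding weight_vec_def by (cases "B.ybasis s r = 0") auto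
  have "transfer (\<lambda>r. of_int (wt r) * u r) r
      = (\<Sum>s\<le>e. A.ycoord u s * (of_int (2 * int s - int e) * B.ybasis s r))"
    unfolding transfer_def by (rule sum.cong) (simp_all add: A)
  also have "\<dots> = of_int (wt' r) * transfer u r"
    unfolding transfer_def B[symmetric] by (simp add: sum_distrib_left algebra_simps)
  finally show "transfer (\<lambda>r. of_int (wt r) * u r) r = of_int (wt' r) * transfer u r" .
qed

lemma bij_transfer: "bij_betw transfer S S'"
proof (rule bij_betw_imageI)
  show "inj_on transfer S"
  proof
    fix u v assume u: "u \<in> S" and v: "v \<in> S" and eq: "transfer u = transfer v"
    have "A.ycoord u s = A.ycoord v s" if "s \<le> e" for s
      using arg_cong[OF eq, of "\<lambda>w. B.ycoord w s"] B.ycoord_comb[OF that] unfolding transfer_def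
      by simp
    then show "u = v" using A.ybasis_expansion[OF u] A.ybasis_expansion[OF v] by simp
  qed
  show "transfer ` S = S'"
  proof (intro subset_antisym subsetI)
    fix v assume v: "v \<in> S'"
    define u where "u = (\<lambda>r. \<Sum>s\<le>e. B.ycoord v s * A.ybasis s r)"
    have "u \<in> S" unfolding u_def using A.sum_mem A.ybasis_mem by blast
    moreover have "transfer u = v"
      unfolding u_def transfer_comb transfer_ybasis using B.ybasis_expansion[OF v] by simp
    ultimately show "v \<in> transfer ` S" by blast
  qed (use transfer_mem in blast)
qed

end

lemma sl2_iso_V_if_lowest_weight:
  fixes rho :: "gen \<Rightarrow> 'i \<Rightarrow> 'i \<Rightarrow> 'k::field_char_0"
  assumes lw: "sl2_lowest_weight_module S (act rho I E) (act rho I F) wt I e z"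
    and H: "\<And>u. u \<in> S \<Longrightarrow> act rho I H u = (\<lambda>r. of_int (wt r) * u r)"
  shows "sl2_iso_V rho I S e"
proof -
  interpret sl2_lowest_weight_pair S "act rho I E" "act rho I F" wt I e z
    "Vsp e" "Vact e E" "Vact e F" "\<lambda>r. int e - 2 * int r" "{..e}" "\<lambda>r. if r = e then 1 else 0"
    by (intro sl2_lowest_weight_pair.intro lw Vsp_lowest_weight_module)
  have "transfer (act rho I g u) = Vact e g (transfer u)" if "g \<in> {E, F, H}" "u \<in> S" for g u
  proof -
    have "transfer (act rho I H u) = Vact e H (transfer u)"
      using transfer_mem[of u] unfolding H[OF \<open>u \<in> S\<close>] transfer_weight_mult Vact_H
      by (auto simp: Vsp_def)
    then show ?thesis using that transfer_E transfer_F by auto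
  qed
  moreover have "act rho I g u \<in> S" if "g \<in> {E, F, H}" "u \<in> S" for g u
    using that A.E_mem A.F_mem A.weight_mult_mem H by auto
  ultimately show ?thesis
    unfolding sl2_iso_V_def using transfer_add transfer_smult bij_transfer
    by (intro conjI exI[where x = transfer]) (auto simp: plus_fun_def)
qed

section \<open>The modules E(a,b) and their tensor products\<close>

lemma EI_Inl [simp]: "Inl p \<in> EI a b \<longleftrightarrow> p \<le> a"
  and EI_Inr [simp]: "Inr p \<in> EI a b \<longleftrightarrow> p \<le> b"
  and finite_EI [simp]: "finite (EI a b)"
  unfolding EI_def by auto

lemma sum_EI: "(\<Sum>s\<in>EI a b. f s) = (\<Sum>k\<le>a. f (Inl k)) + (\<Sum>j\<le>b. f (Inr j))"
  unfolding EI_def by (subst sum.union_disjoint) (auto simp: sum.reindex)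

lemma Erho_Inl_Inl [simp]: "Erho a b C g (Inl p) (Inl k) = Vrho a g p k"
  and Erho_Inr_Inr [simp]: "Erho a b C g (Inr p) (Inr k) = Vrho b g p k"
  and Erho_Inr_Inl [simp]: "Erho a b C g (Inr j) (Inl k) = 0"
  and Erho_X_Inl_Inr [simp]: "Erho a b C (X i) (Inl k) (Inr j) = (if k \<le> a \<and> j \<le> b then C i j k else 0)"
  unfolding Erho_def by (cases g; auto simp: Vrho_out)+

lemma Erho_Inl_Inr [simp]: "g \<in> {E, F, H} \<Longrightarrow> Erho a b C g (Inl k) (Inr j) = 0"
  unfolding Erho_def by auto

lemma Erho_out: "r \<notin> EI a b \<Longrightarrow> Erho a b C g r s = 0"
  unfolding Erho_def by simp

definition mat_act :: "('i \<Rightarrow> 'i \<Rightarrow> 'k::field) \<Rightarrow> 'i set \<Rightarrow> ('i \<Rightarrow> 'k) \<Rightarrow> 'i \<Rightarrow> 'k" where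
  "mat_act M I u = (\<lambda>r. \<Sum>s\<in>I. M r s * u s)"

lemma act_eq_mat_act: "act rho I g u = mat_act (rho g) I u"
  unfolding act_def mat_act_def ..

lemma mat_act_add: "mat_act M I (\<lambda>r. u r + v r) = (\<lambda>r. mat_act M I u r + mat_act M I v r)"
  unfolding mat_act_def by (simp add: distrib_left sum.distrib)

lemma mat_act_smult: "mat_act M I (\<lambda>r. t * u r) = (\<lambda>r. t * mat_act M I u r)"
  unfolding mat_act_def by (simp add: sum_distrib_left algebra_simps)

lemma mat_act_zero: "mat_act M I (\<lambda>_. 0) = (\<lambda>_. 0)"
  unfolding mat_act_def by simp

definition tensor_mat :: "('i \<Rightarrow> 'i \<Rightarrow> 'k::field) \<Rightarrow> ('j \<Rightarrow> 'j \<Rightarrow> 'k) \<Rightarrow> 'i \<times> 'j \<Rightarrow> 'i \<times> 'j \<Rightarrow> 'k" where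
  "tensor_mat A B r s = A (fst r) (fst s) * (if snd r = snd s then 1 else 0)
     + (if fst r = fst s then 1 else 0) * B (snd r) (snd s)"

lemma trho_eq_tensor_mat: "trho rho1 rho2 g = tensor_mat (rho1 g) (rho2 g)"
  unfolding trho_def tensor_mat_def by (intro ext) simp

lemma mat_act_tensor:
  assumes "finite I1" "finite I2"
  shows "mat_act (tensor_mat A B) (I1 \<times> I2) u (r1, r2) =
    (if r2 \<in> I2 then \<Sum>s1\<in>I1. A r1 s1 * u (s1, r2) else 0) +
    (if r1 \<in> I1 then \<Sum>s2\<in>I2. B r2 s2 * u (r1, s2) else 0)"
proof -
  have "mat_act (tensor_mat A B) (I1 \<times> I2) u (r1, r2)
      = (\<Sum>s1\<in>I1. \<Sum>s2\<in>I2. tensor_mat A B (r1, r2) (s1, s2) * u (s1, s2))"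
    unfolding mat_act_def by (simp add: sum.cartesian_product)
  also have "\<dots> = (\<Sum>s1\<in>I1. \<Sum>s2\<in>I2. A r1 s1 * (if r2 = s2 then u (s1, s2) else 0)
      + (if r1 = s1 then B r2 s2 * u (s1, s2) else 0))"
    by (intro sum.cong refl) (simp add: tensor_mat_def algebra_simps)
  also have "\<dots> = (\<Sum>s1\<in>I1. \<Sum>s2\<in>I2. A r1 s1 * (if r2 = s2 then u (s1, s2) else 0))
      + (\<Sum>s1\<in>I1. \<Sum>s2\<in>I2. if r1 = s1 then B r2 s2 * u (s1, s2) else 0)"
    by (simp add: sum.distrib)
  also have "(\<Sum>s1\<in>I1. \<Sum>s2\<in>I2. if r1 = s1 then B r2 s2 * u (s1, s2) else 0)
      = (\<Sum>s1\<in>I1. if r1 = s1 then \<Sum>s2\<in>I2. B r2 s2 * u (s1, s2) else 0)"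
    by (rule sum.cong) auto
  finally show ?thesis
    using assms by (simp add: sum_distrib_left[symmetric] sum.delta)
qed

lemma mat_act_tensor_in:
  assumes "finite I1" "finite I2" "r1 \<in> I1" "r2 \<in> I2"
  shows "mat_act (tensor_mat A B) (I1 \<times> I2) u (r1, r2) =
    (\<Sum>s1\<in>I1. A r1 s1 * u (s1, r2)) + (\<Sum>s2\<in>I2. B r2 s2 * u (r1, s2))"
  using mat_act_tensor[OF assms(1,2), of A B u r1 r2] assms(3,4) by simp

lemma mat_act_tensor_comb:
  assumes "finite I1" "finite I2" "r1 \<in> I1" "r2 \<in> I2"
  shows "mat_act (tensor_mat (\<lambda>x y. \<Sum>k\<in>K. c k * P k x y) (\<lambda>x y. \<Sum>k\<in>K. c k * Q k x y)) (I1 \<times> I2) u (r1, r2)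
       = (\<Sum>k\<in>K. c k * mat_act (tensor_mat (P k) (Q k)) (I1 \<times> I2) u (r1, r2))"
  unfolding mat_act_tensor_in[OF assms]
  by (simp add: sum_distrib_left sum_distrib_right sum.distrib distrib_left sum.swap[of _ K]
      algebra_simps)

lemma mat_act_tensor_twice:
  assumes "finite I1" "finite I2" "r1 \<in> I1" "r2 \<in> I2"
  shows "mat_act (tensor_mat P1 P2) (I1 \<times> I2) (mat_act (tensor_mat Q1 Q2) (I1 \<times> I2) u) (r1, r2) =
      (\<Sum>s1\<in>I1. \<Sum>t1\<in>I1. P1 r1 s1 * (Q1 s1 t1 * u (t1, r2))) +
      (\<Sum>s1\<in>I1. \<Sum>t2\<in>I2. P1 r1 s1 * (Q2 r2 t2 * u (s1, t2))) +
      ((\<Sum>s2\<in>I2. \<Sum>t1\<in>I1. P2 r2 s2 * (Q1 r1 t1 * u (t1, s2))) +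
      (\<Sum>s2\<in>I2. \<Sum>t2\<in>I2. P2 r2 s2 * (Q2 s2 t2 * u (r1, t2))))"
proof -
  note in_prod = mat_act_tensor_in[OF assms(1,2)]
  have "(\<Sum>s1\<in>I1. P1 r1 s1 * mat_act (tensor_mat Q1 Q2) (I1 \<times> I2) u (s1, r2)) =
     (\<Sum>s1\<in>I1. P1 r1 s1 * ((\<Sum>t1\<in>I1. Q1 s1 t1 * u (t1, r2)) + (\<Sum>t2\<in>I2. Q2 r2 t2 * u (s1, t2))))"
    by (rule sum.cong) (simp_all add: in_prod assms)
  moreover have "(\<Sum>s2\<in>I2. P2 r2 s2 * mat_act (tensor_mat Q1 Q2) (I1 \<times> I2) u (r1, s2)) =
     (\<Sum>s2\<in>I2. P2 r2 s2 * ((\<Sum>t1\<in>I1. Q1 r1 t1 * u (t1, s2)) + (\<Sum>t2\<in>I2. Q2 s2 t2 * u (r1, t2))))"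
    by (rule sum.cong) (simp_all add: in_prod assms)
  ultimately show ?thesis
    unfolding in_prod[OF assms(3,4)] by (simp add: distrib_left sum.distrib sum_distrib_left)
qed

lemma mat_commutator_row:
  fixes A B C :: "'i \<Rightarrow> 'i \<Rightarrow> 'k::field"
  assumes "\<And>s. s \<in> I \<Longrightarrow> (\<Sum>t\<in>I. A r t * B t s - B r t * A t s) = C r s"
  shows "(\<Sum>s\<in>I. \<Sum>t\<in>I. A r s * (B s t * f t)) - (\<Sum>s\<in>I. \<Sum>t\<in>I. B r s * (A s t * f t))
    = (\<Sum>t\<in>I. C r t * f t)"
proof -
  have "(\<Sum>s\<in>I. \<Sum>t\<in>I. A r s * (B s t * f t)) - (\<Sum>s\<in>I. \<Sum>t\<in>I. B r s * (A s t * f t))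
      = (\<Sum>t\<in>I. \<Sum>s\<in>I. (A r s * B s t - B r s * A s t) * f t)"
    by (subst (1 2) sum.swap) (simp add: sum_subtractf[symmetric] algebra_simps)
  also have "\<dots> = (\<Sum>t\<in>I. (\<Sum>s\<in>I. A r s * B s t - B r s * A s t) * f t)"
    by (simp add: sum_distrib_right)
  finally show ?thesis using assms by simp
qed

lemma mat_act_tensor_commutator:
  fixes A1 B1 C1 :: "'i \<Rightarrow> 'i \<Rightarrow> 'k::field" and A2 B2 C2 :: "'j \<Rightarrow> 'j \<Rightarrow> 'k"
  assumes fin: "finite I1" "finite I2" and r: "r1 \<in> I1" "r2 \<in> I2"
    and c1: "\<And>s. s \<in> I1 \<Longrightarrow> (\<Sum>t\<in>I1. A1 r1 t * B1 t s - B1 r1 t * A1 t s) = C1 r1 s"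
    and c2: "\<And>s. s \<in> I2 \<Longrightarrow> (\<Sum>t\<in>I2. A2 r2 t * B2 t s - B2 r2 t * A2 t s) = C2 r2 s"
  shows "mat_act (tensor_mat A1 A2) (I1 \<times> I2) (mat_act (tensor_mat B1 B2) (I1 \<times> I2) u) (r1, r2)
       - mat_act (tensor_mat B1 B2) (I1 \<times> I2) (mat_act (tensor_mat A1 A2) (I1 \<times> I2) u) (r1, r2)
       = mat_act (tensor_mat C1 C2) (I1 \<times> I2) u (r1, r2)"
proof -
  have "(\<Sum>s1\<in>I1. \<Sum>t2\<in>I2. A1 r1 s1 * (B2 r2 t2 * u (s1, t2))) =
        (\<Sum>s2\<in>I2. \<Sum>t1\<in>I1. B2 r2 s2 * (A1 r1 t1 * u (t1, s2)))"
    and "(\<Sum>s2\<in>I2. \<Sum>t1\<in>I1. A2 r2 s2 * (B1 r1 t1 * u (t1, s2))) =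
        (\<Sum>s1\<in>I1. \<Sum>t2\<in>I2. B1 r1 s1 * (A2 r2 t2 * u (s1, t2)))"
    by (subst sum.swap; simp add: mult.left_commute)+
  then show ?thesis
    unfolding mat_act_tensor_twice[OF fin r]
    using mat_commutator_row[where A = A1 and B = B1 and C = C1 and f = "\<lambda>t. u (t, r2)", OF c1]
      mat_commutator_row[where A = A2 and B = B2 and C = C2 and f = "\<lambda>t. u (r1, t)", OF c2]
    by (simp add: mat_act_tensor_in[OF fin r] algebra_simps)
qed

lemma Vrho_EF_commutator:
  assumes "p \<le> a" "q \<le> a"
  shows "(\<Sum>k\<le>a. Vrho a E p k * Vrho a F k q - Vrho a F p k * Vrho a E k q) = (Vrho a H p q :: 'k::field_char_0)"
proof -
  have "(\<Sum>k\<le>a. Vrho a E p k * Vrho a F k q - Vrho a F p k * Vrho a E k q :: 'k) =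
      (if p < a then of_nat (Suc p * (a - p)) * Vrho a F (Suc p) q else 0) -
      (if 1 \<le> p \<and> p \<le> a then Vrho a E (p - 1) q else 0)"
    unfolding sum_subtractf sum_Vrho_E sum_Vrho_F ..
  also have "\<dots> = Vrho a H p q"
  proof (cases "p = q")
    case True
    have "(if p < a then of_nat (Suc p * (a - p)) * Vrho a F (Suc p) q else 0) -
        (if 1 \<le> p \<and> p \<le> a then Vrho a E (p - 1) q else (0::'k))
        = (if p < a then of_nat (Suc p * (a - p)) else 0) - (if 1 \<le> p then of_nat (p * (a - p + 1)) else (0::'k))"
      using True assms by (auto simp: Vrho_def)
    also have "\<dots> = of_int (int a - 2 * int p)" by (rule Vrho_EF_coeff[OF assms(1)])
    also have "\<dots> = Vrho a H p q" using True assms by (simp add: Vrho_def)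
    finally show ?thesis .
  qed (auto simp: Vrho_def)
  finally show ?thesis .
qed

lemma Erho_EF_commutator:
  assumes "r \<in> EI a b" "s \<in> EI a b"
  shows "(\<Sum>t\<in>EI a b. Erho a b C E r t * Erho a b C F t s - Erho a b C F r t * Erho a b C E t s)
    = (Erho a b C H r s :: 'k::field_char_0)"
  using assms by (cases r; cases s) (simp_all add: sum_EI Vrho_EF_commutator)

definition E_wt :: "nat \<Rightarrow> nat \<Rightarrow> nat + nat \<Rightarrow> int" where
  "E_wt a b = case_sum (\<lambda>p. int a - 2 * int p) (\<lambda>j. int b - 2 * int j)"

lemma E_wt_simps [simp]: "E_wt a b (Inl p) = int a - 2 * int p" "E_wt a b (Inr j) = int b - 2 * int j"
  unfolding E_wt_def by simp_all

lemma Erho_H: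
  "r \<in> EI a b \<Longrightarrow> s \<in> EI a b \<Longrightarrow> Erho a b C H r s = (if r = s then of_int (E_wt a b r) else 0)"
  by (cases r; cases s) (auto simp: Vrho_def)

lemma Erho_E_weight: "Erho a b C E r s \<noteq> 0 \<Longrightarrow> E_wt a b r = E_wt a b s + 2"
  and Erho_F_weight: "Erho a b C F r s \<noteq> 0 \<Longrightarrow> E_wt a b r = E_wt a b s + (- 2)"
  by (cases r; cases s; auto simp: Vrho_def split: if_splits)+

definition tensor_wt :: "('i \<Rightarrow> int) \<Rightarrow> ('j \<Rightarrow> int) \<Rightarrow> 'i \<times> 'j \<Rightarrow> int" where
  "tensor_wt w1 w2 r = w1 (fst r) + w2 (snd r)"

lemma mat_act_tensor_weight_vec:
  fixes A :: "'i \<Rightarrow> 'i \<Rightarrow> 'k::field" and B :: "'j \<Rightarrow> 'j \<Rightarrow> 'k"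
  assumes fin: "finite I1" "finite I2"
    and A: "\<And>r s. A r s \<noteq> 0 \<Longrightarrow> w1 r = w1 s + \<delta>"
    and B: "\<And>r s. B r s \<noteq> 0 \<Longrightarrow> w2 r = w2 s + \<delta>"
    and u: "weight_vec (tensor_wt w1 w2) w u"
  shows "weight_vec (tensor_wt w1 w2) (w + \<delta>) (mat_act (tensor_mat A B) (I1 \<times> I2) u)"
  unfolding weight_vec_def
proof (intro allI impI)
  fix r assume nz: "mat_act (tensor_mat A B) (I1 \<times> I2) u r \<noteq> 0"
  obtain r1 r2 where r: "r = (r1, r2)" by (cases r)
  show "tensor_wt w1 w2 r = w + \<delta>"
  proof (rule ccontr)
    assume ne: "tensor_wt w1 w2 r \<noteq> w + \<delta>"
    have A0: "A r1 s1 * u (s1, r2) = 0" for s1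
      using A[of r1 s1] u ne r unfolding weight_vec_def tensor_wt_def by fastforce
    have B0: "B r2 s2 * u (r1, s2) = 0" for s2
      using B[of r2 s2] u ne r unfolding weight_vec_def tensor_wt_def by fastforce
    have "mat_act (tensor_mat A B) (I1 \<times> I2) u (r1, r2) = 0"
      unfolding mat_act_tensor[OF fin] A0 B0 by simp
    then show False using nz r by simp
  qed
qed

lemma mat_act_tensor_weight_proj:
  fixes A :: "'i \<Rightarrow> 'i \<Rightarrow> 'k::field" and B :: "'j \<Rightarrow> 'j \<Rightarrow> 'k"
  assumes fin: "finite I1" "finite I2"
    and A: "\<And>r s. A r s \<noteq> 0 \<Longrightarrow> w1 r = w1 s + \<delta>"
    and B: "\<And>r s. B r s \<noteq> 0 \<Longrightarrow> w2 r = w2 s + \<delta>"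
  shows "mat_act (tensor_mat A B) (I1 \<times> I2) (weight_proj (tensor_wt w1 w2) w u)
    = weight_proj (tensor_wt w1 w2) (w + \<delta>) (mat_act (tensor_mat A B) (I1 \<times> I2) u)"
proof
  fix r :: "'i \<times> 'j"
  obtain r1 r2 where r: "r = (r1, r2)" by (cases r)
  have "A r1 s1 * weight_proj (tensor_wt w1 w2) w u (s1, r2)
      = (if tensor_wt w1 w2 r = w + \<delta> then A r1 s1 * u (s1, r2) else 0)" for s1
    using A[of r1 s1] r unfolding weight_proj_def tensor_wt_def by (cases "A r1 s1 = 0") auto
  moreover have "B r2 s2 * weight_proj (tensor_wt w1 w2) w u (r1, s2)
      = (if tensor_wt w1 w2 r = w + \<delta> then B r2 s2 * u (r1, s2) else 0)" for s2
    using B[of r2 s2] r unfolding weight_proj_def tensor_wt_def by (cases "B r2 s2 = 0") auto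
  ultimately show "mat_act (tensor_mat A B) (I1 \<times> I2) (weight_proj (tensor_wt w1 w2) w u) r
      = weight_proj (tensor_wt w1 w2) (w + \<delta>) (mat_act (tensor_mat A B) (I1 \<times> I2) u) r"
    unfolding r mat_act_tensor[OF fin] weight_proj_def using r by auto
qed

section \<open>Equivariant maps a_m (x) V(b) -> V(a)\<close>

lemma sum_Vrho_E_transpose:
  "(\<Sum>i'\<le>m. Vrho m E i' i * f i') = (if 1 \<le> i \<and> i \<le> m then of_nat (i * (m - i + 1)) * f (i - 1) else 0)"
proof -
  have "(\<Sum>i'\<le>m. Vrho m E i' i * f i')
      = (\<Sum>i'\<le>m. if i' = i - 1 then (if 1 \<le> i \<and> i \<le> m then of_nat (i * (m - i + 1)) * f (i - 1) else 0) else 0)"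
    by (rule sum.cong) (auto simp: Vrho_def)
  then show ?thesis by auto
qed

lemma sum_Vrho_F_transpose: "(\<Sum>i'\<le>m. Vrho m F i' i * f i') = (if i < m then f (Suc i) else 0)"
proof -
  have "(\<Sum>i'\<le>m. Vrho m F i' i * f i') = (\<Sum>i'\<le>m. if i' = Suc i then (if i < m then f (Suc i) else 0) else 0)"
    by (rule sum.cong) (auto simp: Vrho_def)
  then show ?thesis by auto
qed

lemma sum_Vrho_H_transpose:
  "(\<Sum>i'\<le>m. Vrho m H i' i * f i') = (if i \<le> m then of_int (int m - 2 * int i) * f i else 0)"
proof -
  have "(\<Sum>i'\<le>m. Vrho m H i' i * f i')
      = (\<Sum>i'\<le>m. if i' = i then (if i \<le> m then of_int (int m - 2 * int i) * f i else 0) else 0)"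
    by (rule sum.cong) (auto simp: Vrho_def)
  then show ?thesis by auto
qed

lemma equivariant_weight:
  assumes "equivariant m b a C" "i \<le> m" "j \<le> b" "k \<le> a" "C i j k \<noteq> (0::'k::field_char_0)"
  shows "int m - 2 * int i + (int b - 2 * int j) = int a - 2 * int k"
proof -
  have "(\<Sum>i'\<le>m. Vrho m H i' i * C i' j k) + (\<Sum>j'\<le>b. Vrho b H j' j * C i j' k)
      = (\<Sum>k'\<le>a. Vrho a H k k' * C i j k')"
    using assms(1-4) unfolding equivariant_def by blast
  then have "of_int (int m - 2 * int i) * C i j k + of_int (int b - 2 * int j) * C i j k
      = of_int (int a - 2 * int k) * C i j k"
    using assms(2-4) by (simp add: sum_Vrho_H_transpose sum_Vrho_H)
  then have "(of_int (int m - 2 * int i + (int b - 2 * int j) - (int a - 2 * int k)) :: 'k) * C i j k = 0"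
    by (simp add: algebra_simps)
  then have "(of_int (int m - 2 * int i + (int b - 2 * int j) - (int a - 2 * int k)) :: 'k) = 0"
    using assms(5) by simp
  then show ?thesis by (metis eq_iff_diff_eq_0 of_int_eq_0_iff)
qed

lemma Erho_X_weight:
  assumes "equivariant m b a C" "i \<le> m" "Erho a b C (X i) r s \<noteq> (0::'k::field_char_0)"
  shows "E_wt a b r = E_wt a b s + (int m - 2 * int i)"
proof -
  obtain k j where "r = Inl k" "s = Inr j" "k \<le> a" "j \<le> b" "C i j k \<noteq> 0"
    using assms(3) by (cases r; cases s) (auto simp: Erho_def split: if_splits)
  then show ?thesis using equivariant_weight[OF assms(1,2)] by fastforce
qed

lemma equivariant_F:
  assumes "equivariant m b a C" "i \<le> m" "j \<le> b" "k \<le> a"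
  shows "(if i < m then C (Suc i) j k else 0) + (if j < b then C i (Suc j) k else 0)
    = (if 1 \<le> k then C i j (k - 1) else 0)"
proof -
  have "(\<Sum>i'\<le>m. Vrho m F i' i * C i' j k) + (\<Sum>j'\<le>b. Vrho b F j' j * C i j' k)
      = (\<Sum>k'\<le>a. Vrho a F k k' * C i j k')"
    using assms unfolding equivariant_def by blast
  then show ?thesis using assms by (simp add: sum_Vrho_F_transpose sum_Vrho_F)
qed

lemma equivariant_E_X0:
  assumes "equivariant m b a C" "j \<le> b" "k \<le> a"
  shows "(if 1 \<le> j then of_nat (j * (b - j + 1)) * C 0 (j - 1) k else 0)
    = (if k < a then of_nat (Suc k * (a - k)) * C 0 j (Suc k) else 0)"
proof -
  have "(\<Sum>i'\<le>m. Vrho m E i' 0 * C i' j k) + (\<Sum>j'\<le>b. Vrho b E j' j * C 0 j' k)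
      = (\<Sum>k'\<le>a. Vrho a E k k' * C 0 j k')"
    using assms unfolding equivariant_def by blast
  then show ?thesis using assms by (simp add: sum_Vrho_E_transpose sum_Vrho_E)
qed

lemma Erho_X_commutator:
  assumes eqv: "equivariant m b a C" and g: "g \<in> {E, F, H}" and i: "i \<le> m"
    and r: "r \<in> EI a b" and s: "s \<in> EI a b"
  shows "(\<Sum>t\<in>EI a b. Erho a b C g r t * Erho a b C (X i) t s - Erho a b C (X i) r t * Erho a b C g t s)
     = (\<Sum>i'\<le>m. Vrho m g i' i * Erho a b C (X i') r s :: 'k::field_char_0)"
proof (cases "\<exists>k j. r = Inl k \<and> s = Inr j")
  case True
  then obtain k j where rs: "r = Inl k" "s = Inr j" and k: "k \<le> a" and j: "j \<le> b"
    using r s by auto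
  have "(\<Sum>i'\<le>m. Vrho m g i' i * C i' j k) + (\<Sum>j'\<le>b. Vrho b g j' j * C i j' k)
      = (\<Sum>k'\<le>a. Vrho a g k k' * C i j k')"
    using eqv g i j k unfolding equivariant_def by blast
  then show ?thesis using rs g k j by (auto simp: sum_EI sum_subtractf algebra_simps)
next
  case False
  then show ?thesis using g by (cases r; cases s) (auto simp: sum_EI)
qed

lemma nonzero_map_X0:
  assumes eqv: "equivariant m b a (C :: nat \<Rightarrow> nat \<Rightarrow> nat \<Rightarrow> 'k::field_char_0)"
    and nz: "nonzero_map m b a C"
  obtains j k where "j \<le> b" "k \<le> a" "C 0 j k \<noteq> 0"
proof -
  have "C i j k = 0" if "\<forall>j\<le>b. \<forall>k\<le>a. C 0 j k = 0" "i \<le> m" "j \<le> b" "k \<le> a" for i j k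
    using that(2-4)
  proof (induction i arbitrary: j k)
    case (Suc i)
    then show ?case
      using equivariant_F[OF eqv _ Suc.prems(2,3), of i] Suc.IH[of "Suc j" k] Suc.IH[of j "k - 1"]
      by (auto split: if_splits)
  qed (use that(1) in blast)
  then show ?thesis using nz that unfolding nonzero_map_def by blast
qed

lemma chain_nonzero:
  fixes g :: "nat \<Rightarrow> 'k::field"
  assumes rel: "\<And>k. k < n \<Longrightarrow> \<alpha> k * g k = \<beta> k * g (Suc k)"
    and \<alpha>: "\<And>k. k < n \<Longrightarrow> \<alpha> k \<noteq> 0" and \<beta>: "\<And>k. k < n \<Longrightarrow> \<beta> k \<noteq> 0"
    and ex: "\<exists>k\<le>n. g k \<noteq> 0" and k: "k \<le> n"
  shows "g k \<noteq> 0"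
proof
  assume gk: "g k = 0"
  have up: "g (k + j) = 0" if "k + j \<le> n" for j
    using that
  proof (induction j)
    case (Suc j)
    then show ?case using rel[of "k + j"] \<beta>[of "k + j"] by simp
  qed (simp add: gk)
  have down: "g (k - j) = 0" if "j \<le> k" for j
    using that
  proof (induction j)
    case (Suc j)
    then have "g (Suc (k - Suc j)) = 0" and "k - Suc j < n" using k by (simp_all add: Suc_diff_Suc)
    then show ?case using rel[of "k - Suc j"] \<alpha>[of "k - Suc j"] by simp
  qed (simp add: gk)
  obtain k' where "k' \<le> n" "g k' \<noteq> 0" using ex by blast
  then show False using up[of "k' - k"] down[of "k - k'"] by (cases "k \<le> k'") simp_all
qed

lemma X0_weight_shift:
  assumes "equivariant m d c (C :: nat \<Rightarrow> nat \<Rightarrow> nat \<Rightarrow> 'k::field_char_0)"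
    and "int m + int d = int c + 2 * int \<delta>" "j \<le> d" "k \<le> c" "C 0 j k \<noteq> 0"
  shows "j = k + \<delta>"
  using equivariant_weight[OF assms(1) le0 assms(3-5)] assms(2) by linarith

lemma sum_X0:
  assumes "equivariant m d c (C :: nat \<Rightarrow> nat \<Rightarrow> nat \<Rightarrow> 'k::field_char_0)"
    and "int m + int d = int c + 2 * int \<delta>" "k \<le> c"
  shows "(\<Sum>j\<le>d. C 0 j k * f j) = (if k + \<delta> \<le> d then C 0 (k + \<delta>) k * f (k + \<delta>) else 0)"
proof -
  have "C 0 j k * f j = 0" if "j \<le> d" "j \<noteq> k + \<delta>" for j
    using X0_weight_shift[OF assms(1,2) that(1) assms(3)] that(2) by auto
  then show ?thesis by (auto intro: sum_single sum.neutral)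
qed

lemma X0_diagonal_nonzero:
  assumes eqv: "equivariant m d c (C :: nat \<Rightarrow> nat \<Rightarrow> nat \<Rightarrow> 'k::field_char_0)"
    and nz: "nonzero_map m d c C" and shift: "int m + int d = int c + 2 * int \<delta>"
    and k: "k \<le> c" "k + \<delta> \<le> d"
  shows "C 0 (k + \<delta>) k \<noteq> 0"
proof (rule chain_nonzero[where n = "min c (d - \<delta>)" and g = "\<lambda>k. C 0 (k + \<delta>) k"
      and \<alpha> = "\<lambda>k. of_nat ((Suc k + \<delta>) * (d - (k + \<delta>)))" and \<beta> = "\<lambda>k. of_nat (Suc k * (c - k))"])
  fix k assume k: "k < min c (d - \<delta>)"
  have "(if 1 \<le> Suc k + \<delta> then of_nat ((Suc k + \<delta>) * (d - (Suc k + \<delta>) + 1)) * C 0 (Suc k + \<delta> - 1) k else 0)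
      = (if k < c then of_nat (Suc k * (c - k)) * C 0 (Suc k + \<delta>) (Suc k) else 0)"
    by (rule equivariant_E_X0[OF eqv]) (use k in auto)
  moreover have "d - (Suc k + \<delta>) + 1 = d - (k + \<delta>)" "Suc k + \<delta> - 1 = k + \<delta>" "1 \<le> Suc k + \<delta>" "k < c"
    using k by auto
  ultimately show "of_nat ((Suc k + \<delta>) * (d - (k + \<delta>))) * C 0 (k + \<delta>) k
      = of_nat (Suc k * (c - k)) * C 0 (Suc k + \<delta>) (Suc k)"
    by (simp only: if_True)
  show "(of_nat ((Suc k + \<delta>) * (d - (k + \<delta>))) :: 'k) \<noteq> 0"
    and "(of_nat (Suc k * (c - k)) :: 'k) \<noteq> 0"
    unfolding of_nat_eq_0_iff using k by auto
next
  obtain j k where "j \<le> d" "k \<le> c" "C 0 j k \<noteq> 0" using nonzero_map_X0[OF eqv nz] .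
  then show "\<exists>k\<le>min c (d - \<delta>). C 0 (k + \<delta>) k \<noteq> 0"
    using X0_weight_shift[OF eqv shift] by (metis add_diff_cancel_right' diff_le_mono min.boundedI)
qed (use k in simp)

section \<open>S_1 as an sl(2)-module\<close>

locale E_tensor =
  fixes m a b c d :: nat and C1 C2 :: "nat \<Rightarrow> nat \<Rightarrow> nat \<Rightarrow> 'k::field_char_0"
  assumes equivariant1: "equivariant m b a C1" and equivariant2: "equivariant m d c C2"
begin

abbreviation "Ix \<equiv> EI a b \<times> EI c d"
abbreviation "rho \<equiv> trho (Erho a b C1) (Erho c d C2)"
abbreviation "Op g \<equiv> act rho Ix g"
abbreviation "wt \<equiv> tensor_wt (E_wt a b) (E_wt c d)"
abbreviation "SS \<equiv> S1 m a b C1 c d C2"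

definition blocks :: "((nat + nat) \<times> (nat + nat)) set" where
  "blocks = (Inl ` {..a} \<times> Inr ` {..d}) \<union> (Inr ` {..b} \<times> Inl ` {..c})"

lemma blocks_simps [simp]:
  "(Inl x, Inr y) \<in> blocks \<longleftrightarrow> x \<le> a \<and> y \<le> d"
  "(Inr x, Inl y) \<in> blocks \<longleftrightarrow> x \<le> b \<and> y \<le> c"
  "(Inl x, Inl y) \<notin> blocks"
  "(Inr x, Inr y) \<notin> blocks"
  unfolding blocks_def by auto

lemma blocks_subset: "blocks \<subseteq> Ix"
  unfolding blocks_def by auto

lemma mem_S1_iff: "u \<in> SS \<longleftrightarrow> (\<forall>p. p \<notin> blocks \<longrightarrow> u p = 0) \<and> (\<forall>i\<le>m. Op (X i) u = (\<lambda>_. 0))"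
  unfolding S1_def blocks_def by (simp add: zero_fun_def)

lemma blocks_ext:
  assumes "\<forall>p. p \<notin> blocks \<longrightarrow> u p = 0" "\<forall>p. p \<notin> blocks \<longrightarrow> v p = 0"
    and "\<And>p q. p \<le> a \<Longrightarrow> q \<le> d \<Longrightarrow> u (Inl p, Inr q) = v (Inl p, Inr q)"
    and "\<And>p q. p \<le> b \<Longrightarrow> q \<le> c \<Longrightarrow> u (Inr p, Inl q) = v (Inr p, Inl q)"
  shows "u = v"
proof
  fix r
  show "u r = v r"
  proof (cases "r \<in> blocks")
    case False
    then have "u r = 0" "v r = 0" using assms(1,2) by blast+
    then show ?thesis by simp
  next
    case True
    then show ?thesis unfolding blocks_def using assms(3,4) by auto
  qed
qed

lemma Op_eq_mat_act: "Op g u = mat_act (tensor_mat (Erho a b C1 g) (Erho c d C2 g)) Ix u"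
  by (simp add: act_eq_mat_act trho_eq_tensor_mat)

lemma Op_out: "r \<notin> Ix \<Longrightarrow> Op g u r = 0"
  by (cases r) (auto simp: Op_eq_mat_act mat_act_tensor Erho_out)

lemma Op_in: "r1 \<in> EI a b \<Longrightarrow> r2 \<in> EI c d \<Longrightarrow> Op g u (r1, r2) =
   (\<Sum>s1\<in>EI a b. Erho a b C1 g r1 s1 * u (s1, r2)) + (\<Sum>s2\<in>EI c d. Erho c d C2 g r2 s2 * u (r1, s2))"
  unfolding Op_eq_mat_act by (rule mat_act_tensor_in) auto

lemma Op_add: "Op g (\<lambda>r. u r + v r) = (\<lambda>r. Op g u r + Op g v r)"
  and Op_smult: "Op g (\<lambda>r. t * u r) = (\<lambda>r. t * Op g u r)"
  and Op_zero: "Op g (\<lambda>_. 0) = (\<lambda>_. 0)"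
  unfolding Op_eq_mat_act by (rule mat_act_add mat_act_smult mat_act_zero)+

lemma Op_X_commutator:
  assumes g: "g \<in> {E, F, H}" and i: "i \<le> m"
  shows "Op g (Op (X i) u) r - Op (X i) (Op g u) r = (\<Sum>i'\<le>m. Vrho m g i' i * Op (X i') u r)"
proof (cases "r \<in> Ix")
  case True
  then obtain r1 r2 where r: "r = (r1, r2)" "r1 \<in> EI a b" "r2 \<in> EI c d" by auto
  have "Op g (Op (X i) u) r - Op (X i) (Op g u) r =
     mat_act (tensor_mat (\<lambda>x y. \<Sum>i'\<le>m. Vrho m g i' i * Erho a b C1 (X i') x y)
       (\<lambda>x y. \<Sum>i'\<le>m. Vrho m g i' i * Erho c d C2 (X i') x y)) Ix u (r1, r2)"
    unfolding Op_eq_mat_act r(1)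
    by (rule mat_act_tensor_commutator)
      (auto simp: r Erho_X_commutator[OF equivariant1 g i] Erho_X_commutator[OF equivariant2 g i])
  also have "\<dots> = (\<Sum>i'\<le>m. Vrho m g i' i * Op (X i') u r)"
    unfolding r(1) Op_eq_mat_act by (rule mat_act_tensor_comb) (auto simp: r)
  finally show ?thesis .
qed (simp add: Op_out)

lemma Op_EF_commutator: "Op E (Op F u) r - Op F (Op E u) r = Op H u r"
proof (cases "r \<in> Ix")
  case True
  then obtain r1 r2 where r: "r = (r1, r2)" "r1 \<in> EI a b" "r2 \<in> EI c d" by auto
  show ?thesis unfolding Op_eq_mat_act r(1)
    by (rule mat_act_tensor_commutator) (auto simp: r Erho_EF_commutator)
qed (simp add: Op_out)

lemma Op_H: assumes u: "\<forall>r. r \<notin> Ix \<longrightarrow> u r = 0" shows "Op H u = (\<lambda>r. of_int (wt r) * u r)"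
proof
  fix r
  show "Op H u r = of_int (wt r) * u r"
  proof (cases "r \<in> Ix")
    case True
    then obtain r1 r2 where r: "r = (r1, r2)" "r1 \<in> EI a b" "r2 \<in> EI c d" by auto
    have "(\<Sum>s1\<in>EI a b. Erho a b C1 H r1 s1 * u (s1, r2)) = of_int (E_wt a b r1) * u (r1, r2)"
      using r by (subst sum_single[of r1]) (auto simp: Erho_H)
    moreover have "(\<Sum>s2\<in>EI c d. Erho c d C2 H r2 s2 * u (r1, s2)) = of_int (E_wt c d r2) * u (r1, r2)"
      using r by (subst sum_single[of r2]) (auto simp: Erho_H)
    ultimately show ?thesis unfolding r(1) Op_in[OF r(2,3)] by (simp add: tensor_wt_def algebra_simps)
  next
    case False
    then have "u r = 0" using u by blast
    then show ?thesis using False by (simp add: Op_out)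
  qed
qed

lemma Op_blocks:
  assumes g: "g \<in> {E, F, H}" and u: "\<forall>p. p \<notin> blocks \<longrightarrow> u p = 0" and p: "p \<notin> blocks"
  shows "Op g u p = 0"
proof (cases "p \<in> Ix")
  case True
  then obtain p1 p2 where pp: "p = (p1, p2)" "p1 \<in> EI a b" "p2 \<in> EI c d" by auto
  have "u (Inl x, Inl y) = 0" "u (Inr x, Inr y) = 0" for x y using u by simp_all
  then show ?thesis
    using g p pp(2,3) unfolding pp(1) Op_in[OF pp(2,3)]
    by (cases p1; cases p2) (auto simp: sum_EI)
qed (simp add: Op_out)

lemma S1_stable: assumes u: "u \<in> SS" and g: "g \<in> {E, F, H}" shows "Op g u \<in> SS"
proof -
  have X_u: "Op (X i) u = (\<lambda>_. 0)" if "i \<le> m" for i using u that unfolding mem_S1_iff by blast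
  have "Op (X i) (Op g u) = (\<lambda>_. 0)" if i: "i \<le> m" for i
  proof
    fix r
    have "(\<Sum>i'\<le>m. Vrho m g i' i * Op (X i') u r) = 0"
      using X_u by (intro sum.neutral) auto
    then show "Op (X i) (Op g u) r = 0"
      using Op_X_commutator[OF g i, of u r] X_u[OF i] by (simp add: Op_zero)
  qed
  moreover have "\<forall>p. p \<notin> blocks \<longrightarrow> Op g u p = 0"
    using Op_blocks[OF g] u unfolding mem_S1_iff by blast
  ultimately show ?thesis unfolding mem_S1_iff by blast
qed

lemma Op_E_weight: "weight_vec wt w u \<Longrightarrow> weight_vec wt (w + 2) (Op E u)"
  and Op_F_weight: "weight_vec wt w u \<Longrightarrow> weight_vec wt (w + (- 2)) (Op F u)"
  unfolding Op_eq_mat_act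
  by (rule mat_act_tensor_weight_vec[OF finite_EI finite_EI];
      (erule Erho_E_weight Erho_F_weight | assumption))+

lemma S1_support: "u \<in> SS \<Longrightarrow> r \<notin> Ix \<Longrightarrow> u r = 0"
  using blocks_subset unfolding mem_S1_iff by blast

lemma S1_EF_commutator:
  assumes u: "u \<in> SS" and w: "weight_vec wt w u"
  shows "Op E (Op F u) r = Op F (Op E u) r + of_int w * u r"
proof -
  have "Op E (Op F u) r - Op F (Op E u) r = of_int (wt r) * u r"
    using Op_EF_commutator[of u r] Op_H S1_support[OF u] by simp
  also have "\<dots> = of_int w * u r"
  proof (cases "u r = 0")
    case False
    then have "wt r = w" using w unfolding weight_vec_def by blast
    then show ?thesis by simp
  qed simp
  finally show ?thesis by (simp add: algebra_simps)
qed

lemma S1_weight_proj_mem: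
  assumes u: "u \<in> SS" shows "weight_proj wt w u \<in> SS"
proof -
  have "Op (X i) (weight_proj wt w u) = weight_proj wt (w + (int m - 2 * int i)) (Op (X i) u)"
    if "i \<le> m" for i
    unfolding Op_eq_mat_act
    by (rule mat_act_tensor_weight_proj)
      (auto intro: Erho_X_weight[OF equivariant1 that] Erho_X_weight[OF equivariant2 that])
  then show ?thesis using u unfolding mem_S1_iff weight_proj_def by auto
qed

lemma S1_weight_module: "sl2_weight_module SS (Op E) (Op F) wt Ix"
proof
  fix u v assume "u \<in> SS" "v \<in> SS"
  then show "(\<lambda>r. u r + v r) \<in> SS" unfolding mem_S1_iff by (simp add: Op_add)
next
  fix u t assume "u \<in> SS"
  then show "(\<lambda>r. t * u r) \<in> SS" unfolding mem_S1_iff by (simp add: Op_smult)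
next
  fix u :: "(nat + nat) \<times> (nat + nat) \<Rightarrow> 'k" and w assume "weight_vec wt w u"
  then show "weight_vec wt (w - 2) (Op F u)" using Op_F_weight by simp
next
  show "(\<lambda>_. 0) \<in> SS" unfolding mem_S1_iff by (simp add: Op_zero)
qed (simp_all add: Op_add Op_smult S1_stable S1_support S1_EF_commutator S1_weight_proj_mem
    Op_E_weight)

end

section \<open>Lowest weight vectors of S_1\<close>

definition grid_F_kernel :: "nat \<Rightarrow> nat \<Rightarrow> (nat \<Rightarrow> nat \<Rightarrow> 'k::comm_ring) \<Rightarrow> bool" where
  "grid_F_kernel A B v \<longleftrightarrow> (\<forall>p\<le>A. \<forall>q\<le>B.
     (if 1 \<le> p then v (p - 1) q else 0) + (if 1 \<le> q then v p (q - 1) else 0) = 0)"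

lemma grid_F_kernel_at:
  "grid_F_kernel A B v \<Longrightarrow> p \<le> A \<Longrightarrow> q \<le> B \<Longrightarrow>
    (if 1 \<le> p then v (p - 1) q else 0) + (if 1 \<le> q then v p (q - 1) else 0) = 0"
  unfolding grid_F_kernel_def by blast

lemma grid_F_kernel_swap:
  assumes "grid_F_kernel A B v" shows "grid_F_kernel B A (\<lambda>p q. v q p)"
  unfolding grid_F_kernel_def
proof (intro allI impI)
  fix p q assume "p \<le> B" "q \<le> A"
  then show "(if 1 \<le> p then v q (p - 1) else 0) + (if 1 \<le> q then v (q - 1) p else 0) = 0"
    using grid_F_kernel_at[OF assms, of q p] by (simp add: add.commute)
qed

lemma grid_F_kernel_antidiagonal:
  fixes v :: "nat \<Rightarrow> nat \<Rightarrow> 'k::comm_ring_1"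
  assumes F: "grid_F_kernel A B v" and top: "\<And>p. 1 \<le> p \<Longrightarrow> p \<le> A \<Longrightarrow> v p B = 0"
    and pq: "p \<le> A" "q \<le> B"
  shows "v p q = (if p + q = B then (-1) ^ p * v 0 B else 0)"
  using pq
proof (induction "B - q" arbitrary: p q)
  case 0
  then have "q = B" by simp
  then show ?case using top[of p] 0 by (cases "p = 0") auto
next
  case (Suc k)
  have q: "Suc q \<le> B" "B - Suc q = k" using Suc.hyps(2) by auto
  have "(if 1 \<le> p then v (p - 1) (Suc q) else 0) + v p q = 0"
    using grid_F_kernel_at[OF F Suc.prems(1) q(1)] by simp
  then have vpq: "v p q = - (if 1 \<le> p then v (p - 1) (Suc q) else 0)"
    by (simp add: eq_neg_iff_add_eq_0 add.commute)
  show ?case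
  proof (cases "p = 0")
    case True
    then show ?thesis using vpq q by simp
  next
    case False
    have "v (p - 1) (Suc q) = (if p - 1 + Suc q = B then (-1) ^ (p - 1) * v 0 B else 0)"
      using Suc.hyps(1)[OF q(2)[symmetric]] Suc.prems q(1) by simp
    moreover have "p - 1 + Suc q = p + q" and "(-1::'k) ^ p = - ((-1) ^ (p - 1))"
      using False by (simp, cases p, simp_all)
    ultimately show ?thesis using vpq False by simp
  qed
qed

lemma grid_F_kernel_corner:
  fixes v :: "nat \<Rightarrow> nat \<Rightarrow> 'k::idom"
  assumes F: "grid_F_kernel A B v" and top: "\<And>p. 1 \<le> p \<Longrightarrow> p \<le> A \<Longrightarrow> v p B = 0"
    and BA: "B < A"
  shows "v 0 B = 0"
proof -
  have "v B 0 = 0" using grid_F_kernel_at[OF F, of "Suc B" 0] BA by simp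
  moreover have "v B 0 = (-1) ^ B * v 0 B" using grid_F_kernel_antidiagonal[OF F top, of B 0] BA by simp
  ultimately show ?thesis by simp
qed

context E_tensor
begin

lemma Op_F_Inl_Inr: "p \<le> a \<Longrightarrow> q \<le> d \<Longrightarrow> Op F u (Inl p, Inr q) =
    (if 1 \<le> p then u (Inl (p - 1), Inr q) else 0) + (if 1 \<le> q then u (Inl p, Inr (q - 1)) else 0)"
  and Op_F_Inr_Inl: "p \<le> b \<Longrightarrow> q \<le> c \<Longrightarrow> Op F u (Inr p, Inl q) =
    (if 1 \<le> p then u (Inr (p - 1), Inl q) else 0) + (if 1 \<le> q then u (Inr p, Inl (q - 1)) else 0)"
  by (simp_all add: Op_in sum_EI sum_Vrho_F)

lemma Op_X0_Inl_Inl: "p \<le> a \<Longrightarrow> q \<le> c \<Longrightarrow> Op (X 0) u (Inl p, Inl q) =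
    (\<Sum>j\<le>b. C1 0 j p * u (Inr j, Inl q)) + (\<Sum>j\<le>d. C2 0 j q * u (Inl p, Inr j))"
  by (simp add: Op_in sum_EI)

lemma Op_X_off_diagonal:
  assumes u: "\<forall>p. p \<notin> blocks \<longrightarrow> u p = 0" and r: "\<And>x y. r \<noteq> (Inl x, Inl y)"
  shows "Op (X i) u r = 0"
proof (cases "r \<in> Ix")
  case True
  then obtain r1 r2 where rr: "r = (r1, r2)" "r1 \<in> EI a b" "r2 \<in> EI c d" by auto
  have "u (Inl x, Inl y) = 0" "u (Inr x, Inr y) = 0" for x y using u by simp_all
  then show ?thesis
    using r unfolding rr(1) Op_in[OF rr(2,3)] by (cases r1; cases r2) (auto simp: sum_EI)
qed (simp add: Op_out)

text \<open>Induction along [F, X i] = X (i + 1).\<close>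

lemma Op_X_eq_zero:
  assumes F: "Op F u = (\<lambda>_. 0)" and X0: "Op (X 0) u = (\<lambda>_. 0)" and i: "i \<le> m"
  shows "Op (X i) u = (\<lambda>_. 0)"
  using i
proof (induction i)
  case (Suc i)
  show ?case
  proof
    fix r
    have "Op F (Op (X i) u) r - Op (X i) (Op F u) r = Op (X (Suc i)) u r"
      using Op_X_commutator[of F i u r] Suc.prems by (simp add: sum_Vrho_F_transpose)
    then show "Op (X (Suc i)) u r = 0" using Suc F by (simp add: Op_zero)
  qed
qed (rule X0)

lemma grid_F_kernel_Inl_Inr:
  "Op F u = (\<lambda>_. 0) \<Longrightarrow> grid_F_kernel a d (\<lambda>p q. u (Inl p, Inr q))"
  unfolding grid_F_kernel_def by (metis Op_F_Inl_Inr)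

lemma grid_F_kernel_Inr_Inl:
  "Op F u = (\<lambda>_. 0) \<Longrightarrow> grid_F_kernel c b (\<lambda>q p. u (Inr p, Inl q))"
  by (rule grid_F_kernel_swap) (unfold grid_F_kernel_def, metis Op_F_Inr_Inl)

lemma lowest_weight_Inl_Inr:
  assumes "Op F u = (\<lambda>_. 0)" and "\<And>p. 1 \<le> p \<Longrightarrow> p \<le> a \<Longrightarrow> u (Inl p, Inr d) = 0"
    and "p \<le> a" "q \<le> d"
  shows "u (Inl p, Inr q) = (if p + q = d then (-1) ^ p * u (Inl 0, Inr d) else 0)"
  by (rule grid_F_kernel_antidiagonal[OF grid_F_kernel_Inl_Inr, of u]) (use assms in auto)

lemma lowest_weight_Inr_Inl:
  assumes "Op F u = (\<lambda>_. 0)" and "\<And>q. 1 \<le> q \<Longrightarrow> q \<le> c \<Longrightarrow> u (Inr b, Inl q) = 0"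
    and "p \<le> b" "q \<le> c"
  shows "u (Inr p, Inl q) = (if p + q = b then (-1) ^ q * u (Inr b, Inl 0) else 0)"
  using grid_F_kernel_antidiagonal[OF grid_F_kernel_Inr_Inl[OF assms(1)], of q p] assms(2-4)
  by (simp add: add.commute)

end

locale E_tensor_shift = E_tensor +
  fixes \<delta> :: nat
  assumes socle_sum: "a + b = m" and shift: "int m + int d = int c + 2 * int \<delta>"
    and top_bound: "d \<le> c + \<delta>"
    and nonzero1: "nonzero_map m b a C1" and nonzero2: "nonzero_map m d c C2"
begin

lemma C1_X0_nonzero: "C1 0 b 0 \<noteq> 0"
  using X0_diagonal_nonzero[OF equivariant1 nonzero1, of b 0] socle_sum by simp

lemma shift_le: "\<delta> \<le> d"
proof -
  obtain j k where "j \<le> d" "k \<le> c" "C2 0 j k \<noteq> 0" using nonzero_map_X0[OF equivariant2 nonzero2] .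
  then show ?thesis using X0_weight_shift[OF equivariant2 shift] by fastforce
qed

lemma Op_X0:
  assumes "p \<le> a" "q \<le> c"
  shows "Op (X 0) u (Inl p, Inl q) = (if p = 0 then C1 0 b 0 * u (Inr b, Inl q) else 0)
    + (if q + \<delta> \<le> d then C2 0 (q + \<delta>) q * u (Inl p, Inr (q + \<delta>)) else 0)"
proof -
  have "int m + int b = int a + 2 * int b" using socle_sum by simp
  note sums = sum_X0[OF equivariant1 this assms(1)] sum_X0[OF equivariant2 shift assms(2)]
  show ?thesis unfolding Op_X0_Inl_Inl[OF assms] sums by (cases "p = 0") simp_all
qed

lemma lowest_weight_top:
  assumes u: "u \<in> SS" and p: "1 \<le> p" "p \<le> a" and q: "q \<le> c" "q + \<delta> \<le> d"
  shows "u (Inl p, Inr (q + \<delta>)) = 0"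
proof -
  have "Op (X 0) u (Inl p, Inl q) = 0" using u unfolding mem_S1_iff by simp
  then show ?thesis
    using Op_X0[OF p(2) q(1), of u] X0_diagonal_nonzero[OF equivariant2 nonzero2 shift q] p q by simp
qed

lemma lowest_weight_LR:
  assumes u: "u \<in> SS" and F: "Op F u = (\<lambda>_. 0)" and "p \<le> a" "q \<le> d"
  shows "u (Inl p, Inr q) = (if p + q = d then (-1) ^ p * u (Inl 0, Inr d) else 0)"
proof (rule lowest_weight_Inl_Inr[OF F _ assms(3,4)])
  fix p assume "1 \<le> p" "p \<le> a"
  then show "u (Inl p, Inr d) = 0"
    using lowest_weight_top[OF u, of p "d - \<delta>"] shift_le top_bound by simp
qed

lemma lowest_weight_eq_zero:
  assumes u: "u \<in> SS" and F: "Op F u = (\<lambda>_. 0)" and corner: "u (Inl 0, Inr d) = 0"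
  shows "u = (\<lambda>_. 0)"
proof -
  have LR: "u (Inl p, Inr q) = 0" if "p \<le> a" "q \<le> d" for p q
    using lowest_weight_LR[OF u F that] corner by simp
  have top: "u (Inr b, Inl q) = 0" if "q \<le> c" for q
  proof -
    have "Op (X 0) u (Inl 0, Inl q) = 0" using u unfolding mem_S1_iff by simp
    then show ?thesis
      using Op_X0[of 0 q u] that LR[of 0 "q + \<delta>"] C1_X0_nonzero by (cases "q + \<delta> \<le> d") auto
  qed
  show ?thesis
  proof (rule blocks_ext)
    show "\<forall>p. p \<notin> blocks \<longrightarrow> u p = 0" using u unfolding mem_S1_iff by blast
    fix p q
    show "p \<le> a \<Longrightarrow> q \<le> d \<Longrightarrow> u (Inl p, Inr q) = 0" by (rule LR)
    show "p \<le> b \<Longrightarrow> q \<le> c \<Longrightarrow> u (Inr p, Inl q) = 0"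
      using lowest_weight_Inr_Inl[OF F, of p q] top by simp
  qed simp
qed

lemma S1_eq_zero:
  assumes a: "a \<noteq> 0" and d: "\<delta> < d \<or> d < a"
  shows "SS = {0}"
proof -
  have ker_F: "u = (\<lambda>_. 0)" if u: "u \<in> SS" and F: "Op F u = (\<lambda>_. 0)" for u
  proof (rule lowest_weight_eq_zero[OF u F])
    show "u (Inl 0, Inr d) = 0"
    proof (cases "d < a")
      case True
      have "u (Inl p, Inr d) = 0" if "1 \<le> p" "p \<le> a" for p
        using lowest_weight_LR[OF u F that(2), of d] that by simp
      then show ?thesis using grid_F_kernel_corner[OF grid_F_kernel_Inl_Inr[OF F] _ True] by simp
    next
      case False
      then have "\<delta> < d" using d by simp
      then have "u (Inl 1, Inr (d - 1)) = 0"
        using lowest_weight_top[OF u, of 1 "d - 1 - \<delta>"] a top_bound by simp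
      then show ?thesis using lowest_weight_LR[OF u F, of 1 "d - 1"] a \<open>\<delta> < d\<close> by simp
    qed
  qed
  note S1 = S1_weight_module
  have "u = 0" if "u \<in> SS" for u
    using sl2_weight_module.eq_zero_if_ker_F_trivial[OF S1 ker_F that] by (simp add: zero_fun_def)
  moreover have "0 \<in> SS" using sl2_weight_module.zero_mem[OF S1] by (simp add: zero_fun_def)
  ultimately show ?thesis by blast
qed

end

locale E_tensor_complementary = E_tensor_shift m a b c d C1 C2 d
  for m a b c d and C1 C2 :: "nat \<Rightarrow> nat \<Rightarrow> nat \<Rightarrow> 'k::field_char_0"
begin

lemma complementary_sum: "c + d = m"
  using shift by simp

text \<open>X 0 relates only the corner coordinates (0, d) and (b, 0); the coefficient of the
  second block is chosen so that their contributions cancel.\<close>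

definition lw_vector :: "(nat + nat) \<times> (nat + nat) \<Rightarrow> 'k" where
  "lw_vector r = (case r of
       (Inl p, Inr q) \<Rightarrow> if p \<le> a \<and> q \<le> d \<and> p + q = d then (-1) ^ p else 0
     | (Inr p, Inl q) \<Rightarrow> if p \<le> b \<and> q \<le> c \<and> p + q = b then - (C2 0 d 0 / C1 0 b 0) * (-1) ^ q else 0
     | _ \<Rightarrow> 0)"

lemma lw_vector_simps [simp]:
  "lw_vector (Inl p, Inr q) = (if p \<le> a \<and> q \<le> d \<and> p + q = d then (-1) ^ p else 0)"
  "lw_vector (Inr p, Inl q) = (if p \<le> b \<and> q \<le> c \<and> p + q = b then - (C2 0 d 0 / C1 0 b 0) * (-1) ^ q else 0)"
  "lw_vector (Inl p, Inl q) = 0"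
  "lw_vector (Inr p, Inr q) = 0"
  unfolding lw_vector_def by simp_all

lemma lw_vector_blocks: "\<forall>p. p \<notin> blocks \<longrightarrow> lw_vector p = 0"
proof (intro allI impI)
  fix p :: "(nat + nat) \<times> (nat + nat)" assume "p \<notin> blocks"
  then show "lw_vector p = 0" by (cases p; rename_tac x y; case_tac x; case_tac y) auto
qed

lemma lowest_weight_multiple:
  assumes u: "u \<in> SS" and F: "Op F u = (\<lambda>_. 0)"
  shows "u = (\<lambda>r. u (Inl 0, Inr d) * lw_vector r)"
proof -
  have X0: "Op (X 0) u (Inl p, Inl q) = 0" if "p \<le> a" "q \<le> c" for p q
    using u that unfolding mem_S1_iff by simp
  have RL_top: "u (Inr b, Inl q) = 0" if "1 \<le> q" "q \<le> c" for q
    using X0[of 0 q] Op_X0[of 0 q u] that C1_X0_nonzero by simp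
  have "C1 0 b 0 * u (Inr b, Inl 0) + C2 0 d 0 * u (Inl 0, Inr d) = 0"
    using X0[of 0 0] Op_X0[of 0 0 u] by simp
  then have "C1 0 b 0 * u (Inr b, Inl 0) = - (C2 0 d 0 * u (Inl 0, Inr d))"
    by (simp add: eq_neg_iff_add_eq_0)
  then have corner: "u (Inr b, Inl 0) = - (C2 0 d 0 / C1 0 b 0) * u (Inl 0, Inr d)"
    using C1_X0_nonzero by (simp add: field_simps)
  show ?thesis
  proof (rule blocks_ext)
    show "\<forall>p. p \<notin> blocks \<longrightarrow> u p = 0" using u unfolding mem_S1_iff by blast
    show "\<forall>p. p \<notin> blocks \<longrightarrow> u (Inl 0, Inr d) * lw_vector p = 0" using lw_vector_blocks by simp
    fix p q
    assume "p \<le> a" "q \<le> d"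
    then show "u (Inl p, Inr q) = u (Inl 0, Inr d) * lw_vector (Inl p, Inr q)"
      unfolding lowest_weight_LR[OF u F \<open>p \<le> a\<close> \<open>q \<le> d\<close>] by (simp add: mult.commute)
  next
    fix p q
    assume "p \<le> b" "q \<le> c"
    moreover have "u (Inr p, Inl q) = (if p + q = b then (-1) ^ q * u (Inr b, Inl 0) else 0)"
      using lowest_weight_Inr_Inl[OF F RL_top] \<open>p \<le> b\<close> \<open>q \<le> c\<close> by blast
    ultimately show "u (Inr p, Inl q) = u (Inl 0, Inr d) * lw_vector (Inr p, Inl q)"
      unfolding corner by (simp add: mult_ac)
  qed
qed

lemma lw_vector_F: assumes "a \<le> d" shows "Op F lw_vector = (\<lambda>_. 0)"
proof
  fix r
  have cb: "c \<le> b" using assms socle_sum complementary_sum by simp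
  show "Op F lw_vector r = 0"
  proof (cases "r \<in> blocks")
    case True
    then consider p q where "r = (Inl p, Inr q)" "p \<le> a" "q \<le> d"
      | p q where "r = (Inr p, Inl q)" "p \<le> b" "q \<le> c"
      unfolding blocks_def by auto
    then show ?thesis
    proof cases
      case 1
      then show ?thesis using assms unfolding 1(1) Op_F_Inl_Inr[OF 1(2,3)]
        by (cases p; cases q) auto
    next
      case 2
      then show ?thesis using cb unfolding 2(1) Op_F_Inr_Inl[OF 2(2,3)]
        by (cases p; cases q) auto
    qed
  qed (use Op_blocks lw_vector_blocks in blast)
qed

lemma lw_vector_X0: "Op (X 0) lw_vector = (\<lambda>_. 0)"
proof
  fix r
  show "Op (X 0) lw_vector r = 0"
  proof (cases "\<exists>x y. r = (Inl x, Inl y)")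
    case True
    then obtain x y where r: "r = (Inl x, Inl y)" by blast
    show ?thesis
    proof (cases "x \<le> a \<and> y \<le> c")
      case True
      then show ?thesis unfolding r using Op_X0[of x y lw_vector] C1_X0_nonzero by auto
    qed (simp add: r Op_out)
  qed (use Op_X_off_diagonal[OF lw_vector_blocks] in blast)
qed

lemma lw_vector_mem: "a \<le> d \<Longrightarrow> lw_vector \<in> SS"
  unfolding mem_S1_iff using lw_vector_blocks Op_X_eq_zero lw_vector_F lw_vector_X0 by blast

lemma lw_vector_weight: assumes "a \<le> d" shows "weight_vec wt (- int (d - a)) lw_vector"
  unfolding weight_vec_def
proof (intro allI impI)
  fix r assume nz: "lw_vector r \<noteq> 0"
  show "wt r = - int (d - a)"
  proof (cases r)
    case (Pair r1 r2)
    then show ?thesis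
      using nz assms socle_sum complementary_sum
      by (cases r1; cases r2) (auto simp: tensor_wt_def of_nat_diff split: if_splits)
  qed
qed

lemma S1_lowest_weight_module:
  assumes "a \<le> d"
  shows "sl2_lowest_weight_module SS (Op E) (Op F) wt Ix (d - a) lw_vector"
proof (rule sl2_lowest_weight_module.intro[OF S1_weight_module], unfold_locales)
  show "lw_vector \<in> SS" by (rule lw_vector_mem[OF assms])
  show "weight_vec wt (- int (d - a)) lw_vector" by (rule lw_vector_weight[OF assms])
  show "Op F lw_vector = (\<lambda>_. 0)" by (rule lw_vector_F[OF assms])
  have "lw_vector (Inl 0, Inr d) = 1" by simp
  then show "lw_vector \<noteq> (\<lambda>_. 0)" by (metis one_neq_zero)
  fix u assume "u \<in> SS" "Op F u = (\<lambda>_. 0)"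
  then show "\<exists>t. u = (\<lambda>r. t * lw_vector r)" by (metis lowest_weight_multiple)
qed

lemma S1_iso: "a \<le> d \<Longrightarrow> sl2_iso_V rho Ix SS (d - a)"
  by (rule sl2_iso_V_if_lowest_weight[OF S1_lowest_weight_module]) (use Op_H S1_support in auto)

end

lemma S1_tensor_E_complementary:
  fixes C1 C2 :: "nat \<Rightarrow> nat \<Rightarrow> nat \<Rightarrow> 'k::field_char_0"
  assumes "a + b = m" "c + d = m" "a \<noteq> 0"
    and "equivariant m b a C1" "nonzero_map m b a C1" "equivariant m d c C2" "nonzero_map m d c C2"
  shows "if a \<le> d
    then sl2_iso_V (trho (Erho a b C1) (Erho c d C2)) (EI a b \<times> EI c d) (S1 m a b C1 c d C2) (d - a)
    else S1 m a b C1 c d C2 = {0}"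
proof -
  interpret E_tensor_complementary m a b c d C1 C2
    by unfold_locales (use assms in auto)
  show ?thesis using S1_iso S1_eq_zero assms(3) by simp
qed

lemma S1_tensor_Z:
  fixes C1 C2 :: "nat \<Rightarrow> nat \<Rightarrow> nat \<Rightarrow> 'k::field_char_0"
  assumes "a + b = m" "a \<noteq> 0" "equivariant m b a C1" "nonzero_map m b a C1"
    and "equivariant m (c + m) c C2" "nonzero_map m (c + m) c C2"
  shows "if c = 0
    then sl2_iso_V (trho (Erho a b C1) (Erho c (c + m) C2)) (EI a b \<times> EI c (c + m))
      (S1 m a b C1 c (c + m) C2) b
    else S1 m a b C1 c (c + m) C2 = {0}"
proof (cases "c = 0")
  case True
  moreover have "a \<le> c + m" "c + m - a = b" using True assms(1) by auto
  ultimately show ?thesis using S1_tensor_E_complementary[of a b m c "c + m" C1 C2] assms by simp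
next
  case False
  interpret E_tensor_shift m a b c "c + m" C1 C2 m
    by unfold_locales (use assms in auto)
  show ?thesis using S1_eq_zero assms(2) False by simp
qed

lemma S1_tensor_Z_dual:
  fixes C1 C2 :: "nat \<Rightarrow> nat \<Rightarrow> nat \<Rightarrow> 'k::field_char_0"
  assumes "a + b = m" "a \<noteq> 0" "equivariant m b a C1" "nonzero_map m b a C1"
    and "equivariant m d (d + m) C2" "nonzero_map m d (d + m) C2"
  shows "S1 m a b C1 (d + m) d C2 = {0}"
proof -
  interpret E_tensor_shift m a b "d + m" d C1 C2 0
    by unfold_locales (use assms in auto)
  show ?thesis using S1_eq_zero assms(2) by (cases "d = 0") simp_all
qed

theorem theorem4p3:
  fixes n m a b :: nat and C1 :: "nat \<Rightarrow> nat \<Rightarrow> nat \<Rightarrow> 'k::field_char_0"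
  assumes "n \<ge> 1" and "m = 2 * n - 1"
    and "a + b = m" and "a \<noteq> 0" and "b \<noteq> 0"
    and "equivariant m b a C1" and "nonzero_map m b a C1"
  shows
    "(\<forall>c d (C2 :: nat \<Rightarrow> nat \<Rightarrow> nat \<Rightarrow> 'k).
        c + d = m \<and> 0 < a \<and> a \<le> c \<and> c < m
        \<and> equivariant m d c C2 \<and> nonzero_map m d c C2 \<longrightarrow>
        (if int d - int a = int b - int c \<and> int d - int a \<ge> 0
         then sl2_iso_V (trho (Erho a b C1) (Erho c d C2)) (EI a b \<times> EI c d)
                (S1 m a b C1 c d C2) (d - a)
         else S1 m a b C1 c d C2 = {0}))
   \<and> (\<forall>c (C2 :: nat \<Rightarrow> nat \<Rightarrow> nat \<Rightarrow> 'k).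
        equivariant m (c + m) c C2 \<and> nonzero_map m (c + m) c C2 \<longrightarrow>
        (if c = 0
         then sl2_iso_V (trho (Erho a b C1) (Erho c (c + m) C2)) (EI a b \<times> EI c (c + m))
                (S1 m a b C1 c (c + m) C2) b
         else S1 m a b C1 c (c + m) C2 = {0}))
   \<and> (\<forall>d (C2 :: nat \<Rightarrow> nat \<Rightarrow> nat \<Rightarrow> 'k).
        equivariant m d (d + m) C2 \<and> nonzero_map m d (d + m) C2 \<longrightarrow>
        S1 m a b C1 (d + m) d C2 = {0})"
proof (intro conjI allI impI)
  fix c d and C2 :: "nat \<Rightarrow> nat \<Rightarrow> nat \<Rightarrow> 'k"
  assume h: "c + d = m \<and> 0 < a \<and> a \<le> c \<and> c < m \<and> equivariant m d c C2 \<and> nonzero_map m d c C2"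
  then have cond: "(int d - int a = int b - int c \<and> int d - int a \<ge> 0) \<longleftrightarrow> a \<le> d"
    using assms(3) by linarith
  show "if int d - int a = int b - int c \<and> int d - int a \<ge> 0
      then sl2_iso_V (trho (Erho a b C1) (Erho c d C2)) (EI a b \<times> EI c d) (S1 m a b C1 c d C2) (d - a)
      else S1 m a b C1 c d C2 = {0}"
    unfolding cond by (rule S1_tensor_E_complementary) (use h assms in auto)
qed (use S1_tensor_Z S1_tensor_Z_dual assms in blast)+

end
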